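(* Let $\beta>2\alpha>0$ with $\beta+2\alpha<1$, let $t\in\mathbb{R}^{s_N}$, and let $Z\sim\mathcal{N}(0,A^{-1})$ be independent of $\widetilde m=\sqrt{N/s_N}\,m$, where $m$ is distributed according to the Gibbs measure. Then $$\mathbb{E}\big[\exp\{t^T(Z+\widetilde m)\}\big]=\mathbb{E}_{\rho_N}\big[\exp\{t^T(A-A^2)^{-1/2}X\}\big],$$ where $X$ is an $s_N$-dimensional random variable whose distribution is strongly log-concave with density $$\rho_N(x)\propto\exp\Big\{-\tfrac12\|x\|^2+\tfrac{N}{s_N}\sum_{k=1}^{s_N}G\Big(\sqrt{\tfrac{s_N}{N}}(Cx)_k\Big)\Big\},$$ with $G(y)=\log\cosh(y)-\frac{y^2}{2}$ and $C=A(A-A^2)^{-1/2}=A^{1/2}(I-A)^{-1/2}$.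
   Context: Let $(s_N)$ be a non-decreasing sequence of positive integers with $s_N$ dividing $N$; $\{1,\dots,N\}$ is partitioned into blocks $S_1,\dots,S_{s_N}$ of size $N/s_N$, block indices cyclic. For $\sigma\in\{-1,+1\}^N$, $m_k=\frac{s_N}{N}\sum_{i\in S_k}\sigma_i$, $m=(m_1,\dots,m_{s_N})$. $A=\beta I+\alpha(P+P^T)$ with $P$ the $s_N\times s_N$ cyclic shift matrix. The Gibbs measure is $\mu_{N,\beta,\alpha}(\sigma)=Z_{N,\beta,\alpha}^{-1}\exp\{\frac{N}{2s_N}m^TAm\}2^{-N}$ on $\{-1,+1\}^N$. A distribution is strongly log-concave if it has a density $e^{-U}$ with $U$ strongly convex. *)

theory Defs
  imports "HOL-Probability.Probability"
begin

text \<open>Vectors in R^s are functions nat => real (only indices < s matter);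
 s x s matrices are functions nat => nat => real vanishing outside {..<s} x {..<s}.\<close>

definition is_mat :: "nat \<Rightarrow> (nat \<Rightarrow> nat \<Rightarrow> real) \<Rightarrow> bool" where
  "is_mat s M \<longleftrightarrow> (\<forall>i j. \<not> (i < s \<and> j < s) \<longrightarrow> M i j = 0)"

definition id_mat :: "nat \<Rightarrow> nat \<Rightarrow> nat \<Rightarrow> real" where
  "id_mat s = (\<lambda>i j. if i < s \<and> j < s \<and> i = j then 1 else 0)"

definition mat_add :: "nat \<Rightarrow> (nat \<Rightarrow> nat \<Rightarrow> real) \<Rightarrow> (nat \<Rightarrow> nat \<Rightarrow> real) \<Rightarrow> nat \<Rightarrow> nat \<Rightarrow> real" where
  "mat_add s M K = (\<lambda>i j. if i < s \<and> j < s then M i j + K i j else 0)"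

definition mat_sub :: "nat \<Rightarrow> (nat \<Rightarrow> nat \<Rightarrow> real) \<Rightarrow> (nat \<Rightarrow> nat \<Rightarrow> real) \<Rightarrow> nat \<Rightarrow> nat \<Rightarrow> real" where
  "mat_sub s M K = (\<lambda>i j. if i < s \<and> j < s then M i j - K i j else 0)"

definition mat_smult :: "nat \<Rightarrow> real \<Rightarrow> (nat \<Rightarrow> nat \<Rightarrow> real) \<Rightarrow> nat \<Rightarrow> nat \<Rightarrow> real" where
  "mat_smult s c M = (\<lambda>i j. if i < s \<and> j < s then c * M i j else 0)"

definition mat_transp :: "(nat \<Rightarrow> nat \<Rightarrow> real) \<Rightarrow> nat \<Rightarrow> nat \<Rightarrow> real" where
  "mat_transp M = (\<lambda>i j. M j i)"

definition mat_mul :: "nat \<Rightarrow> (nat \<Rightarrow> nat \<Rightarrow> real) \<Rightarrow> (nat \<Rightarrow> nat \<Rightarrow> real) \<Rightarrow> nat \<Rightarrow> nat \<Rightarrow> real" where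
  "mat_mul s M K = (\<lambda>i j. if i < s \<and> j < s then (\<Sum>k<s. M i k * K k j) else 0)"

text \<open>Matrix-vector product, as an element of the product space (extensional on {..<s}).\<close>
definition mat_vec :: "nat \<Rightarrow> (nat \<Rightarrow> nat \<Rightarrow> real) \<Rightarrow> (nat \<Rightarrow> real) \<Rightarrow> nat \<Rightarrow> real" where
  "mat_vec s M x = restrict (\<lambda>i. \<Sum>j<s. M i j * x j) {..<s}"

definition mat_sym :: "nat \<Rightarrow> (nat \<Rightarrow> nat \<Rightarrow> real) \<Rightarrow> bool" where
  "mat_sym s M \<longleftrightarrow> (\<forall>i<s. \<forall>j<s. M i j = M j i)"

definition pos_def :: "nat \<Rightarrow> (nat \<Rightarrow> nat \<Rightarrow> real) \<Rightarrow> bool" where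
  "pos_def s M \<longleftrightarrow> (\<forall>x::nat \<Rightarrow> real. (\<exists>i<s. x i \<noteq> 0) \<longrightarrow> 0 < (\<Sum>i<s. \<Sum>j<s. x i * M i j * x j))"

definition mat_inv :: "nat \<Rightarrow> (nat \<Rightarrow> nat \<Rightarrow> real) \<Rightarrow> nat \<Rightarrow> nat \<Rightarrow> real" where
  "mat_inv s M = (THE K. is_mat s K \<and> mat_mul s M K = id_mat s)"

definition mat_sqrt :: "nat \<Rightarrow> (nat \<Rightarrow> nat \<Rightarrow> real) \<Rightarrow> nat \<Rightarrow> nat \<Rightarrow> real" where
  "mat_sqrt s M = (THE K. is_mat s K \<and> mat_sym s K \<and> pos_def s K \<and> mat_mul s K K = M)"

definition cyc_shift :: "nat \<Rightarrow> nat \<Rightarrow> nat \<Rightarrow> real" where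
  "cyc_shift s = (\<lambda>i j. if i < s \<and> j < s \<and> j = Suc i mod s then 1 else 0)"

definition coupling_mat :: "nat \<Rightarrow> real \<Rightarrow> real \<Rightarrow> nat \<Rightarrow> nat \<Rightarrow> real" where
  "coupling_mat s \<beta> \<alpha> = mat_add s (mat_smult s \<beta> (id_mat s))
      (mat_smult s \<alpha> (mat_add s (cyc_shift s) (mat_transp (cyc_shift s))))"

definition spins :: "nat \<Rightarrow> (nat \<Rightarrow> real) set" where
  "spins N = PiE {..<N} (\<lambda>_. {-1, 1})"

definition block :: "nat \<Rightarrow> nat \<Rightarrow> nat \<Rightarrow> nat set" where
  "block N s k = {k * (N div s) ..< Suc k * (N div s)}"

definition magn :: "nat \<Rightarrow> nat \<Rightarrow> (nat \<Rightarrow> real) \<Rightarrow> nat \<Rightarrow> real" where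
  "magn N s \<sigma> k = (real s / real N) * (\<Sum>i\<in>block N s k. \<sigma> i)"

definition gibbs_weight :: "nat \<Rightarrow> nat \<Rightarrow> (nat \<Rightarrow> nat \<Rightarrow> real) \<Rightarrow> (nat \<Rightarrow> real) \<Rightarrow> real" where
  "gibbs_weight N s A \<sigma> =
     exp (real N / (2 * real s) * (\<Sum>k<s. \<Sum>l<s. magn N s \<sigma> k * A k l * magn N s \<sigma> l)) * (1/2) ^ N"

definition gibbs_prob :: "nat \<Rightarrow> nat \<Rightarrow> (nat \<Rightarrow> nat \<Rightarrow> real) \<Rightarrow> (nat \<Rightarrow> real) \<Rightarrow> real" where
  "gibbs_prob N s A \<sigma> = gibbs_weight N s A \<sigma> / (\<Sum>\<tau>\<in>spins N. gibbs_weight N s A \<tau>)"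

definition lebesgue_vec :: "nat \<Rightarrow> (nat \<Rightarrow> real) measure" where
  "lebesgue_vec s = PiM {..<s} (\<lambda>_. lborel)"

definition std_gauss_vec :: "nat \<Rightarrow> (nat \<Rightarrow> real) measure" where
  "std_gauss_vec s = PiM {..<s} (\<lambda>_. density lborel std_normal_density)"

text \<open>Centered Gaussian N(0, Sigma) on R^s: law of Sigma^{1/2} W with W standard normal.\<close>
definition gauss_vec :: "nat \<Rightarrow> (nat \<Rightarrow> nat \<Rightarrow> real) \<Rightarrow> (nat \<Rightarrow> real) measure" where
  "gauss_vec s \<Sigma> = distr (std_gauss_vec s) (lebesgue_vec s) (mat_vec s (mat_sqrt s \<Sigma>))"

definition G_fun :: "real \<Rightarrow> real" where
  "G_fun y = ln (cosh y) - y\<^sup>2 / 2"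

definition rho_unnorm :: "nat \<Rightarrow> nat \<Rightarrow> (nat \<Rightarrow> nat \<Rightarrow> real) \<Rightarrow> (nat \<Rightarrow> real) \<Rightarrow> real" where
  "rho_unnorm N s C x = exp (- (1/2) * (\<Sum>i<s. (x i)\<^sup>2)
      + real N / real s * (\<Sum>k<s. G_fun (sqrt (real s / real N) * (\<Sum>j<s. C k j * x j))))"

definition strongly_convex :: "nat \<Rightarrow> ((nat \<Rightarrow> real) \<Rightarrow> real) \<Rightarrow> bool" where
  "strongly_convex s U \<longleftrightarrow> (\<exists>c>0. \<forall>x y. \<forall>\<theta>\<in>{0..1}.
      U (\<lambda>i. \<theta> * x i + (1 - \<theta>) * y i)
        \<le> \<theta> * U x + (1 - \<theta>) * U y - c / 2 * \<theta> * (1 - \<theta>) * (\<Sum>i<s. (x i - y i)\<^sup>2))"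

end

theory Submission
  imports Defs "HOL-Computational_Algebra.Formal_Power_Series"
begin

text \<open>Write \<open>A - A\<^sup>2 = S\<^sup>2\<close>, \<open>R = S\<^sup>-\<^sup>1\<close>, \<open>C = A R\<close>, and \<open>m\<^sub>\<sigma> = sqrt (N/s) m\<close> for the rescaled
  block magnetisation of a spin configuration \<open>\<sigma>\<close>. Since \<open>G y = log cosh y - y\<^sup>2/2\<close>, the density
  \<open>\<rho>\<^sub>N\<close> is \<open>exp (- x\<^sup>T P x / 2)\<close> with \<open>P = I + C\<^sup>T C = R A R\<close>, times a product of powers
  \<open>cosh\<^bsup>N/s\<^esup>\<close>; expanding these as sums over spin configurations turns \<open>\<rho>\<^sub>N\<close> into a mixture of
  Gaussians \<open>exp (- x\<^sup>T P x / 2 + \<langle>R A m\<^sub>\<sigma>, x\<rangle>)\<close>. Against each of them \<open>exp (t\<^sup>T R x)\<close> integrates, by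
  completing the square, to the Gibbs weight of \<open>\<sigma>\<close> times \<open>exp (t\<^sup>T m\<^sub>\<sigma> + t\<^sup>T A\<^sup>-\<^sup>1 t / 2)\<close>, and this is
  the moment generating function of \<open>Z + m\<^sub>\<sigma>\<close>. Strong log-concavity holds because
  \<open>y\<^sup>2/2 - log cosh y\<close> is convex. The matrix powers \<open>A\<^sup>-\<^sup>1\<close>, \<open>A\<^sup>-\<^sup>1\<^sup>/\<^sup>2\<close>, \<open>S\<close> and \<open>R\<close> are binomial
  series in \<open>I - A\<close> and \<open>(I - 2A)\<^sup>2\<close>, whose row-sum norms are \<open>< 1\<close> under the hypotheses on
  \<open>\<alpha>\<close> and \<open>\<beta>\<close>.\<close>

section \<open>Matrices and vectors indexed by \<open>{..<s}\<close>\<close>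

lemma is_mat_mat_mul [simp]: "is_mat s (mat_mul s M K)"
  by (simp add: is_mat_def mat_mul_def)

lemma is_mat_id_mat [simp]: "is_mat s (id_mat s)"
  by (simp add: is_mat_def id_mat_def)

lemma is_mat_mat_add [simp]: "is_mat s (mat_add s M K)"
  by (simp add: is_mat_def mat_add_def)

lemma is_mat_mat_sub [simp]: "is_mat s (mat_sub s M K)"
  by (simp add: is_mat_def mat_sub_def)

lemma is_mat_mat_smult [simp]: "is_mat s (mat_smult s c M)"
  by (simp add: is_mat_def mat_smult_def)

lemma is_mat_eqI:
  "is_mat s M \<Longrightarrow> is_mat s K \<Longrightarrow> (\<And>i j. i < s \<Longrightarrow> j < s \<Longrightarrow> M i j = K i j) \<Longrightarrow> M = K"
  by (intro ext) (metis is_mat_def)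

lemma mat_mul_assoc: "mat_mul s (mat_mul s M K) L = mat_mul s M (mat_mul s K L)"
proof (rule is_mat_eqI)
  fix i j assume "i < s" "j < s"
  then have "mat_mul s (mat_mul s M K) L i j = (\<Sum>k<s. \<Sum>l<s. M i l * K l k * L k j)"
    by (simp add: mat_mul_def sum_distrib_right)
  also have "\<dots> = (\<Sum>l<s. \<Sum>k<s. M i l * K l k * L k j)"
    by (rule sum.swap)
  also have "\<dots> = mat_mul s M (mat_mul s K L) i j"
    using \<open>i < s\<close> \<open>j < s\<close> by (simp add: mat_mul_def sum_distrib_left mult.assoc)
  finally show "mat_mul s (mat_mul s M K) L i j = mat_mul s M (mat_mul s K L) i j" .
qed simp_all

lemma mat_mul_id_left: assumes "is_mat s M" shows "mat_mul s (id_mat s) M = M"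
proof (rule is_mat_eqI)
  fix i j assume "i < s" "j < s"
  then show "mat_mul s (id_mat s) M i j = M i j"
    by (simp add: mat_mul_def id_mat_def if_distrib[of "\<lambda>a. a * _"] cong: if_cong)
qed (simp_all add: assms)

lemma mat_mul_id_right: assumes "is_mat s M" shows "mat_mul s M (id_mat s) = M"
proof (rule is_mat_eqI)
  fix i j assume "i < s" "j < s"
  then show "mat_mul s M (id_mat s) i j = M i j"
    by (simp add: mat_mul_def id_mat_def if_distrib[of "\<lambda>a. _ * a"] cong: if_cong)
qed (simp_all add: assms)

lemma mat_mul_smult: "mat_mul s (mat_smult s c M) (mat_smult s d K) = mat_smult s (c * d) (mat_mul s M K)"
proof (rule is_mat_eqI)
  fix i j assume "i < s" "j < s"
  then show "mat_mul s (mat_smult s c M) (mat_smult s d K) i j = mat_smult s (c * d) (mat_mul s M K) i j"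
    by (simp add: mat_mul_def mat_smult_def sum_distrib_left ac_simps)
qed simp_all

lemma mat_smult_1: "is_mat s M \<Longrightarrow> mat_smult s 1 M = M"
  by (intro ext) (auto simp: mat_smult_def is_mat_def)

lemma mat_smult_mat_smult: "mat_smult s c (mat_smult s d M) = mat_smult s (c * d) M"
  by (intro ext) (simp add: mat_smult_def)

lemma mat_sym_smult: "mat_sym s M \<Longrightarrow> mat_sym s (mat_smult s c M)"
  by (simp add: mat_sym_def mat_smult_def)

lemma mat_sym_sandwich:
  assumes "mat_sym s M" and "mat_sym s K"
  shows "mat_sym s (mat_mul s M (mat_mul s K M))"
proof -
  have "(\<Sum>k<s. M i k * (\<Sum>l<s. K k l * M l j)) = (\<Sum>k<s. M j k * (\<Sum>l<s. K k l * M l i))"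
    if "i < s" "j < s" for i j
  proof -
    have "(\<Sum>k<s. M i k * (\<Sum>l<s. K k l * M l j)) = (\<Sum>k<s. \<Sum>l<s. M j l * K l k * M k i)"
      using assms that by (auto simp: mat_sym_def sum_distrib_left ac_simps intro!: sum.cong)
    also have "\<dots> = (\<Sum>k<s. M j k * (\<Sum>l<s. K k l * M l i))"
      by (subst sum.swap) (simp add: sum_distrib_left mult.assoc)
    finally show ?thesis .
  qed
  then show ?thesis by (simp add: mat_sym_def mat_mul_def)
qed

definition quad_form :: "nat \<Rightarrow> (nat \<Rightarrow> nat \<Rightarrow> real) \<Rightarrow> (nat \<Rightarrow> real) \<Rightarrow> real" where
  "quad_form s M x = (\<Sum>i<s. \<Sum>j<s. x i * M i j * x j)"

lemma pos_def_iff_quad_form: "pos_def s M \<longleftrightarrow> (\<forall>x. (\<exists>i<s. x i \<noteq> 0) \<longrightarrow> 0 < quad_form s M x)"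
  by (simp add: pos_def_def quad_form_def)

lemma quad_form_nonneg: "pos_def s M \<Longrightarrow> 0 \<le> quad_form s M x"
  unfolding pos_def_iff_quad_form
  by (cases "\<exists>i<s. x i \<noteq> 0") (auto simp: quad_form_def less_imp_le)

lemma pos_def_quad_form_eq_0: "pos_def s M \<Longrightarrow> quad_form s M x = 0 \<Longrightarrow> i < s \<Longrightarrow> x i = 0"
  by (auto simp: pos_def_iff_quad_form)

lemma quad_form_smult: "quad_form s (mat_smult s c M) x = c * quad_form s M x"
  by (simp add: quad_form_def mat_smult_def sum_distrib_left ac_simps)

lemma pos_def_smult: "0 < c \<Longrightarrow> pos_def s M \<Longrightarrow> pos_def s (mat_smult s c M)"
  by (simp add: pos_def_iff_quad_form quad_form_smult)

text \<open>If \<open>K\<^sub>1\<^sup>2 = K\<^sub>2\<^sup>2\<close>, then \<open>D = K\<^sub>1 - K\<^sub>2\<close> satisfies \<open>K\<^sub>1 D + D K\<^sub>2 = 0\<close>; pairing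
  with \<open>D\<close> writes \<open>0\<close> as a sum of quadratic forms of \<open>K\<^sub>1\<close> on the columns and of \<open>K\<^sub>2\<close> on the rows of \<open>D\<close>.\<close>
lemma pos_def_sqrt_unique:
  assumes K1: "is_mat s K1" "pos_def s K1" and K2: "is_mat s K2" "pos_def s K2"
    and eq: "mat_mul s K1 K1 = mat_mul s K2 K2"
  shows "K1 = K2"
proof -
  define D where "D i j = K1 i j - K2 i j" for i j
  have E: "(\<Sum>k<s. K1 i k * D k j) + (\<Sum>k<s. D i k * K2 k j) = 0" if "i < s" "j < s" for i j
  proof -
    have "(\<Sum>k<s. K1 i k * D k j) + (\<Sum>k<s. D i k * K2 k j)
        = mat_mul s K1 K1 i j - mat_mul s K2 K2 i j"
      using that by (simp add: D_def mat_mul_def algebra_simps sum_subtractf)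
    then show ?thesis using eq by simp
  qed
  have "0 = (\<Sum>i<s. \<Sum>j<s. D i j * ((\<Sum>k<s. K1 i k * D k j) + (\<Sum>k<s. D i k * K2 k j)))"
    using E by simp
  also have "\<dots> = (\<Sum>i<s. \<Sum>j<s. \<Sum>k<s. D i j * K1 i k * D k j)
      + (\<Sum>i<s. \<Sum>j<s. \<Sum>k<s. D i k * K2 k j * D i j)"
    by (simp add: distrib_left sum.distrib sum_distrib_left ac_simps)
  also have "(\<Sum>i<s. \<Sum>j<s. \<Sum>k<s. D i j * K1 i k * D k j) = (\<Sum>j<s. quad_form s K1 (\<lambda>i. D i j))"
    unfolding quad_form_def by (rule sum.swap)
  also have "(\<Sum>i<s. \<Sum>j<s. \<Sum>k<s. D i k * K2 k j * D i j) = (\<Sum>i<s. quad_form s K2 (D i))"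
    unfolding quad_form_def by (intro sum.cong refl sum.swap)
  finally have sum0: "(\<Sum>j<s. quad_form s K1 (\<lambda>i. D i j)) + (\<Sum>i<s. quad_form s K2 (D i)) = 0" ..
  moreover have "0 \<le> (\<Sum>j<s. quad_form s K1 (\<lambda>i. D i j))" "0 \<le> (\<Sum>i<s. quad_form s K2 (D i))"
    by (simp_all add: sum_nonneg quad_form_nonneg K1(2) K2(2))
  ultimately have "(\<Sum>j<s. quad_form s K1 (\<lambda>i. D i j)) = 0"
    by linarith
  then have "quad_form s K1 (\<lambda>i. D i j) = 0" if "j < s" for j
    using that by (subst (asm) sum_nonneg_eq_0_iff) (simp_all add: quad_form_nonneg K1(2))
  then have "D i j = 0" if "i < s" "j < s" for i j
    using that pos_def_quad_form_eq_0[OF K1(2)] by blast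
  then show ?thesis
    using K1(1) K2(1) by (intro is_mat_eqI) (auto simp: D_def)
qed

lemma mat_sqrt_eqI:
  assumes "is_mat s K" "mat_sym s K" "pos_def s K" "mat_mul s K K = M"
  shows "mat_sqrt s M = K"
  unfolding mat_sqrt_def
proof (rule the_equality)
  fix K' assume "is_mat s K' \<and> mat_sym s K' \<and> pos_def s K' \<and> mat_mul s K' K' = M"
  then show "K' = K" using assms by (intro pos_def_sqrt_unique[of s K' K]) auto
qed (use assms in simp)

lemma mat_inv_eqI:
  assumes "is_mat s K" "mat_mul s M K = id_mat s" "mat_mul s K M = id_mat s"
  shows "mat_inv s M = K"
  unfolding mat_inv_def
proof (rule the_equality)
  fix K' assume K': "is_mat s K' \<and> mat_mul s M K' = id_mat s"
  then have "K' = mat_mul s (mat_mul s K M) K'" using assms(3) by (simp add: mat_mul_id_left)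
  also have "\<dots> = K" using K' assms(1) by (simp add: mat_mul_assoc mat_mul_id_right)
  finally show "K' = K" .
qed (use assms in simp)

definition dot :: "nat \<Rightarrow> (nat \<Rightarrow> real) \<Rightarrow> (nat \<Rightarrow> real) \<Rightarrow> real" where
  "dot s x y = (\<Sum>i<s. x i * y i)"

lemma dot_commute: "dot s x y = dot s y x"
  by (simp add: dot_def mult.commute)

lemma dot_cong: "(\<And>i. i < s \<Longrightarrow> x i = x' i) \<Longrightarrow> (\<And>i. i < s \<Longrightarrow> y i = y' i) \<Longrightarrow> dot s x y = dot s x' y'"
  unfolding dot_def by (intro sum.cong) auto

lemma dot_restrict_left [simp]: "dot s (restrict x {..<s}) y = dot s x y"
  by (rule dot_cong) auto

lemma dot_restrict_right [simp]: "dot s x (restrict y {..<s}) = dot s x y"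
  by (rule dot_cong) auto

lemma dot_add_left: "dot s (\<lambda>i. x i + y i) z = dot s x z + dot s y z"
  by (simp add: dot_def distrib_right sum.distrib)

lemma mat_vec_cong: "(\<And>j. j < s \<Longrightarrow> x j = y j) \<Longrightarrow> mat_vec s M x = mat_vec s M y"
  unfolding mat_vec_def by (intro restrict_ext sum.cong) auto

lemma mat_vec_restrict [simp]: "mat_vec s M (restrict x {..<s}) = mat_vec s M x"
  by (rule mat_vec_cong) auto

lemma mat_vec_mat_vec: "mat_vec s M (mat_vec s K x) = mat_vec s (mat_mul s M K) x"
  unfolding mat_vec_def[of s M] mat_vec_def[of s "mat_mul s M K"]
proof (rule restrict_ext)
  fix i assume "i \<in> {..<s}"
  then have "(\<Sum>j<s. M i j * mat_vec s K x j) = (\<Sum>j<s. \<Sum>k<s. M i j * K j k * x k)"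
    by (simp add: mat_vec_def sum_distrib_left mult.assoc)
  also have "\<dots> = (\<Sum>k<s. \<Sum>j<s. M i j * K j k * x k)"
    by (rule sum.swap)
  also have "\<dots> = (\<Sum>k<s. mat_mul s M K i k * x k)"
    using \<open>i \<in> {..<s}\<close> by (simp add: mat_mul_def sum_distrib_right)
  finally show "(\<Sum>j<s. M i j * mat_vec s K x j) = (\<Sum>k<s. mat_mul s M K i k * x k)" .
qed

lemma mat_vec_id_mat: "mat_vec s (id_mat s) x = restrict x {..<s}"
  unfolding mat_vec_def restrict_def
  by (simp add: id_mat_def if_distrib[of "\<lambda>a. a * _"] cong: if_cong)

lemma mat_vec_inverse: "mat_mul s M K = id_mat s \<Longrightarrow> mat_vec s M (mat_vec s K x) = restrict x {..<s}"
  by (simp add: mat_vec_mat_vec mat_vec_id_mat)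

lemma dot_mat_vec_sym:
  assumes "mat_sym s M"
  shows "dot s x (mat_vec s M y) = dot s (mat_vec s M x) y"
proof -
  have "dot s x (mat_vec s M y) = (\<Sum>i<s. \<Sum>j<s. x i * M i j * y j)"
    by (simp add: dot_def mat_vec_def sum_distrib_left mult.assoc)
  also have "\<dots> = (\<Sum>j<s. \<Sum>i<s. M j i * x i * y j)"
    using assms by (subst sum.swap) (auto simp: mat_sym_def ac_simps intro!: sum.cong)
  also have "\<dots> = dot s (mat_vec s M x) y"
    by (simp add: dot_def mat_vec_def sum_distrib_right)
  finally show ?thesis .
qed

lemma quad_form_eq_dot: "quad_form s M x = dot s x (mat_vec s M x)"
  by (simp add: quad_form_def dot_def mat_vec_def sum_distrib_left mult.assoc)

lemma quad_form_restrict [simp]: "quad_form s M (restrict x {..<s}) = quad_form s M x"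
  by (simp add: quad_form_eq_dot)

lemma quad_form_mat_sub: "quad_form s (mat_sub s M K) x = quad_form s M x - quad_form s K x"
  by (simp add: quad_form_def mat_sub_def algebra_simps sum_subtractf)

lemma quad_form_sandwich:
  "mat_sym s M \<Longrightarrow> quad_form s (mat_mul s M (mat_mul s K M)) x = quad_form s K (mat_vec s M x)"
  by (simp add: quad_form_eq_dot mat_vec_mat_vec[symmetric] dot_mat_vec_sym)

lemma quad_form_add:
  assumes "mat_sym s M"
  shows "quad_form s M (\<lambda>i. x i + y i) = quad_form s M x + 2 * dot s (mat_vec s M y) x + quad_form s M y"
proof -
  have "quad_form s M (\<lambda>i. x i + y i)
      = quad_form s M x + dot s x (mat_vec s M y) + dot s y (mat_vec s M x) + quad_form s M y"
    by (simp add: quad_form_def dot_def mat_vec_def sum_distrib_left algebra_simps sum.distrib)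
  then show ?thesis
    using dot_mat_vec_sym[OF assms, of y x] by (simp add: dot_commute)
qed

lemma quad_form_diff:
  assumes "mat_sym s M"
  shows "quad_form s M (\<lambda>i. x i - y i) = quad_form s M x - 2 * dot s (mat_vec s M y) x + quad_form s M y"
proof -
  have "quad_form s M (\<lambda>i. x i - y i)
      = quad_form s M x - dot s x (mat_vec s M y) - dot s y (mat_vec s M x) + quad_form s M y"
    by (simp add: quad_form_def dot_def mat_vec_def sum_distrib_left algebra_simps sum.distrib sum_subtractf)
  then show ?thesis
    using dot_mat_vec_sym[OF assms, of y x] by (simp add: dot_commute)
qed

lemma quad_form_mul_self:
  "mat_sym s K \<Longrightarrow> quad_form s (mat_mul s K K) x = dot s (mat_vec s K x) (mat_vec s K x)"
  by (simp add: quad_form_eq_dot mat_vec_mat_vec[symmetric] dot_mat_vec_sym)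

lemma pos_def_mul_self:
  assumes K: "mat_sym s K" and inv: "mat_mul s L K = id_mat s"
  shows "pos_def s (mat_mul s K K)"
  unfolding pos_def_iff_quad_form
proof (intro allI impI)
  fix x :: "nat \<Rightarrow> real" assume "\<exists>i<s. x i \<noteq> 0"
  then obtain i where i: "i < s" "x i \<noteq> 0" by blast
  define y where "y = mat_vec s K x"
  have "mat_vec s L y i = x i"
    using i by (simp add: y_def mat_vec_inverse[OF inv])
  have "\<exists>j<s. y j \<noteq> 0"
  proof (rule ccontr)
    assume "\<not> (\<exists>j<s. y j \<noteq> 0)"
    then have "mat_vec s L y i = 0"
      using i by (simp add: mat_vec_def)
    with \<open>mat_vec s L y i = x i\<close> i show False by simp
  qed
  then obtain j where "j < s" "y j \<noteq> 0" by blast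
  then have "0 < dot s y y"
    unfolding dot_def by (intro sum_pos2[of _ j]) (auto simp: zero_less_mult_iff)
  also have "dot s y y = quad_form s (mat_mul s K K) x"
    by (simp add: y_def quad_form_mul_self[OF K])
  finally show "0 < quad_form s (mat_mul s K K) x" .
qed

section \<open>Real powers of \<open>I - B\<close> for a symmetric contraction \<open>B\<close>\<close>

primrec mat_pow :: "nat \<Rightarrow> (nat \<Rightarrow> nat \<Rightarrow> real) \<Rightarrow> nat \<Rightarrow> nat \<Rightarrow> nat \<Rightarrow> real" where
  "mat_pow s B 0 = id_mat s"
| "mat_pow s B (Suc k) = mat_mul s B (mat_pow s B k)"

lemma is_mat_mat_pow [simp]: "is_mat s (mat_pow s B k)"
  by (cases k) simp_all

lemma mat_pow_add: "mat_mul s (mat_pow s B k) (mat_pow s B l) = mat_pow s B (k + l)"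
  by (induct k) (simp_all add: mat_mul_id_left mat_mul_assoc)

lemma mat_sym_mat_pow:
  assumes "is_mat s B" "mat_sym s B"
  shows "mat_sym s (mat_pow s B k)"
proof (induct k)
  case 0
  then show ?case by (simp add: mat_sym_def id_mat_def)
next
  case (Suc k)
  have swap: "mat_pow s B (Suc k) = mat_mul s (mat_pow s B k) B"
    using mat_pow_add[of s B k 1] assms(1) by (simp add: mat_mul_id_right)
  have "mat_pow s B (Suc k) i j = mat_pow s B (Suc k) j i" if "i < s" "j < s" for i j
  proof -
    have "mat_pow s B (Suc k) i j = (\<Sum>m<s. mat_pow s B k j m * B m i)"
      using that Suc assms(2) by (auto simp: mat_mul_def mat_sym_def mult.commute intro!: sum.cong)
    also have "\<dots> = mat_pow s B (Suc k) j i"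
      using that by (subst swap) (simp add: mat_mul_def)
    finally show ?thesis .
  qed
  then show ?case by (simp add: mat_sym_def)
qed

definition row_sum_norm_le :: "nat \<Rightarrow> (nat \<Rightarrow> nat \<Rightarrow> real) \<Rightarrow> real \<Rightarrow> bool" where
  "row_sum_norm_le s M r \<longleftrightarrow> (\<forall>i<s. (\<Sum>j<s. \<bar>M i j\<bar>) \<le> r)"

lemma row_sum_norm_le_mat_mul:
  assumes M: "row_sum_norm_le s M r1" and K: "row_sum_norm_le s K r2" and "0 \<le> r2"
  shows "row_sum_norm_le s (mat_mul s M K) (r1 * r2)"
  unfolding row_sum_norm_le_def
proof (intro allI impI)
  fix i assume i: "i < s"
  have "(\<Sum>j<s. \<bar>mat_mul s M K i j\<bar>) \<le> (\<Sum>j<s. \<Sum>m<s. \<bar>M i m\<bar> * \<bar>K m j\<bar>)"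
    using i by (auto simp: mat_mul_def abs_mult[symmetric] intro!: sum_mono sum_abs)
  also have "\<dots> = (\<Sum>m<s. \<bar>M i m\<bar> * (\<Sum>j<s. \<bar>K m j\<bar>))"
    by (subst sum.swap) (simp add: sum_distrib_left)
  also have "\<dots> \<le> (\<Sum>m<s. \<bar>M i m\<bar> * r2)"
    using K by (intro sum_mono mult_left_mono) (auto simp: row_sum_norm_le_def)
  also have "\<dots> \<le> r1 * r2"
    using M i \<open>0 \<le> r2\<close> by (auto simp: row_sum_norm_le_def sum_distrib_right[symmetric] intro: mult_right_mono)
  finally show "(\<Sum>j<s. \<bar>mat_mul s M K i j\<bar>) \<le> r1 * r2" .
qed

lemma row_sum_norm_le_mat_pow:
  assumes "row_sum_norm_le s B r" "0 \<le> r"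
  shows "row_sum_norm_le s (mat_pow s B k) (r ^ k)"
proof (induct k)
  case 0
  then show ?case
    by (auto simp: row_sum_norm_le_def id_mat_def if_distrib[of abs] cong: if_cong)
next
  case (Suc k)
  then show ?case
    using row_sum_norm_le_mat_mul[OF assms(1) Suc] assms(2) by simp
qed

lemma abs_le_row_sum_norm:
  assumes "row_sum_norm_le s M r" "is_mat s M" "0 \<le> r"
  shows "\<bar>M i j\<bar> \<le> r"
proof (cases "i < s \<and> j < s")
  case True
  then have "\<bar>M i j\<bar> \<le> (\<Sum>j<s. \<bar>M i j\<bar>)" by (intro member_le_sum) auto
  then show ?thesis using assms True by (auto simp: row_sum_norm_le_def)
qed (use assms in \<open>auto simp: is_mat_def\<close>)

definition mat_power_series ::
    "nat \<Rightarrow> (nat \<Rightarrow> real) \<Rightarrow> (nat \<Rightarrow> nat \<Rightarrow> real) \<Rightarrow> nat \<Rightarrow> nat \<Rightarrow> real" where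
  "mat_power_series s a B = (\<lambda>i j. \<Sum>k. a k * mat_pow s B k i j)"

lemma summable_mat_power_series:
  assumes "row_sum_norm_le s B r" "0 \<le> r" "summable (\<lambda>k. \<bar>a k\<bar> * r ^ k)"
  shows "summable (\<lambda>k. norm (a k * mat_pow s B k i j))"
proof (rule summable_comparison_test'[OF assms(3)])
  fix k :: nat
  have "\<bar>mat_pow s B k i j\<bar> \<le> r ^ k"
    using row_sum_norm_le_mat_pow[OF assms(1,2)] assms(2) by (intro abs_le_row_sum_norm) auto
  then show "norm (norm (a k * mat_pow s B k i j)) \<le> \<bar>a k\<bar> * r ^ k"
    by (simp add: abs_mult mult_left_mono)
qed

lemma is_mat_mat_power_series [simp]: "is_mat s (mat_power_series s a B)"
  using is_mat_mat_pow by (simp add: is_mat_def mat_power_series_def)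

lemma mat_sym_mat_power_series: "is_mat s B \<Longrightarrow> mat_sym s B \<Longrightarrow> mat_sym s (mat_power_series s a B)"
  using mat_sym_mat_pow by (simp add: mat_sym_def mat_power_series_def)

lemma mat_mul_mat_power_series:
  assumes "row_sum_norm_le s B r" "0 \<le> r"
    and a: "summable (\<lambda>k. \<bar>a k\<bar> * r ^ k)" and b: "summable (\<lambda>k. \<bar>b k\<bar> * r ^ k)"
  shows "mat_mul s (mat_power_series s a B) (mat_power_series s b B)
    = mat_power_series s (\<lambda>n. \<Sum>k\<le>n. a k * b (n - k)) B"
proof (rule is_mat_eqI)
  fix i j assume ij: "i < s" "j < s"
  let ?P = "mat_pow s B"
  note summable = summable_mat_power_series[OF assms(1,2) a] summable_mat_power_series[OF assms(1,2) b]
  have "mat_mul s (mat_power_series s a B) (mat_power_series s b B) i j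
      = (\<Sum>m<s. (\<Sum>k. a k * ?P k i m) * (\<Sum>k. b k * ?P k m j))"
    using ij by (simp add: mat_mul_def mat_power_series_def)
  also have "\<dots> = (\<Sum>m<s. \<Sum>n. \<Sum>k\<le>n. (a k * ?P k i m) * (b (n - k) * ?P (n - k) m j))"
    by (intro sum.cong refl Cauchy_product summable)
  also have "\<dots> = (\<Sum>n. \<Sum>m<s. \<Sum>k\<le>n. (a k * ?P k i m) * (b (n - k) * ?P (n - k) m j))"
    by (intro suminf_sum[symmetric] summable_Cauchy_product summable)
  also have "\<dots> = (\<Sum>n. (\<Sum>k\<le>n. a k * b (n - k)) * ?P n i j)"
  proof (intro suminf_cong)
    fix n
    have "(\<Sum>m<s. \<Sum>k\<le>n. (a k * ?P k i m) * (b (n - k) * ?P (n - k) m j))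
        = (\<Sum>k\<le>n. a k * b (n - k) * mat_mul s (?P k) (?P (n - k)) i j)"
      using ij by (subst sum.swap) (simp add: mat_mul_def sum_distrib_left ac_simps)
    also have "\<dots> = (\<Sum>k\<le>n. a k * b (n - k)) * ?P n i j"
      by (simp add: mat_pow_add sum_distrib_right)
    finally show "(\<Sum>m<s. \<Sum>k\<le>n. (a k * ?P k i m) * (b (n - k) * ?P (n - k) m j))
        = (\<Sum>k\<le>n. a k * b (n - k)) * ?P n i j" .
  qed
  also have "\<dots> = mat_power_series s (\<lambda>n. \<Sum>k\<le>n. a k * b (n - k)) B i j"
    by (simp add: mat_power_series_def)
  finally show "mat_mul s (mat_power_series s a B) (mat_power_series s b B) i j
      = mat_power_series s (\<lambda>n. \<Sum>k\<le>n. a k * b (n - k)) B i j" .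
qed simp_all

definition one_minus_powr_coeff :: "real \<Rightarrow> nat \<Rightarrow> real" where
  "one_minus_powr_coeff a k = (-1) ^ k * (a gchoose k)"

lemma summable_one_minus_powr_coeff:
  assumes "0 \<le> r" "r < 1"
  shows "summable (\<lambda>k. \<bar>one_minus_powr_coeff a k\<bar> * r ^ k)"
proof -
  have "ereal (norm r) < conv_radius ((gchoose) a)"
    using assms by (simp add: conv_radius_gchoose)
  from abs_summable_in_conv_radius[OF this] show ?thesis
    using assms by (simp add: one_minus_powr_coeff_def abs_mult power_abs)
qed

lemma one_minus_powr_coeff_convolution:
  "(\<Sum>k\<le>n. one_minus_powr_coeff a k * one_minus_powr_coeff b (n - k)) = one_minus_powr_coeff (a + b) n"
proof -
  have "one_minus_powr_coeff a k * one_minus_powr_coeff b (n - k) = (-1) ^ n * ((a gchoose k) * (b gchoose (n - k)))"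
    if "k \<le> n" for k
  proof -
    have "(-1::real) ^ k * (-1) ^ (n - k) = (-1) ^ n"
      using that by (simp add: power_add[symmetric])
    then show ?thesis
      unfolding one_minus_powr_coeff_def by (metis mult.assoc mult.left_commute)
  qed
  then have "(\<Sum>k\<le>n. one_minus_powr_coeff a k * one_minus_powr_coeff b (n - k))
      = (-1) ^ n * (\<Sum>k\<in>{0..n}. (a gchoose k) * (b gchoose (n - k)))"
    by (simp add: sum_distrib_left atLeast0AtMost)
  also have "\<dots> = one_minus_powr_coeff (a + b) n"
    by (simp add: one_minus_powr_coeff_def gbinomial_Vandermonde)
  finally show ?thesis .
qed

lemma one_minus_powr_coeff_0: "one_minus_powr_coeff 0 k = (if k = 0 then 1 else 0)"
  by (cases k) (auto simp: one_minus_powr_coeff_def gbinomial_Suc)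

lemma one_minus_powr_coeff_1: "one_minus_powr_coeff 1 k = (if k = 0 then 1 else if k = 1 then -1 else 0)"
proof -
  have "(1::real) gchoose k = of_nat (1 choose k)"
    by (metis binomial_gbinomial of_nat_1)
  then show ?thesis
    by (cases k) (auto simp: one_minus_powr_coeff_def binomial_eq_0)
qed

locale sym_contraction =
  fixes s :: nat and B :: "nat \<Rightarrow> nat \<Rightarrow> real" and r :: real
  assumes is_mat_B: "is_mat s B" and sym_B: "mat_sym s B" and norm_le: "row_sum_norm_le s B r"
    and nonneg: "0 \<le> r" and less_1: "r < 1"
begin

definition id_minus_powr :: "real \<Rightarrow> nat \<Rightarrow> nat \<Rightarrow> real" where
  "id_minus_powr a = mat_power_series s (one_minus_powr_coeff a) B"

lemma is_mat_id_minus_powr [simp]: "is_mat s (id_minus_powr a)"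
  by (simp add: id_minus_powr_def)

lemma mat_sym_id_minus_powr: "mat_sym s (id_minus_powr a)"
  unfolding id_minus_powr_def by (intro mat_sym_mat_power_series is_mat_B sym_B)

lemma id_minus_powr_add: "mat_mul s (id_minus_powr a) (id_minus_powr b) = id_minus_powr (a + b)"
  unfolding id_minus_powr_def
  by (simp add: mat_mul_mat_power_series[OF norm_le nonneg] summable_one_minus_powr_coeff[OF nonneg less_1]
      one_minus_powr_coeff_convolution)

lemma id_minus_powr_0: "id_minus_powr 0 = id_mat s"
proof (rule is_mat_eqI)
  fix i j assume "i < s" "j < s"
  have "id_minus_powr 0 i j = (\<Sum>k. if k = 0 then mat_pow s B 0 i j else 0)"
    unfolding id_minus_powr_def mat_power_series_def by (intro suminf_cong) (simp add: one_minus_powr_coeff_0)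
  also have "\<dots> = mat_pow s B 0 i j"
    by (rule sums_unique[symmetric]) (rule sums_single)
  finally show "id_minus_powr 0 i j = id_mat s i j" by simp
qed simp_all

lemma id_minus_powr_1: "id_minus_powr 1 = mat_sub s (id_mat s) B"
proof (rule is_mat_eqI)
  fix i j assume "i < s" "j < s"
  have "id_minus_powr 1 i j = (\<Sum>k\<in>{0,1}. one_minus_powr_coeff 1 k * mat_pow s B k i j)"
    unfolding id_minus_powr_def mat_power_series_def
    by (rule suminf_finite) (auto simp: one_minus_powr_coeff_1)
  then show "id_minus_powr 1 i j = mat_sub s (id_mat s) B i j"
    using \<open>i < s\<close> \<open>j < s\<close> by (simp add: one_minus_powr_coeff_1 mat_mul_id_right[OF is_mat_B] mat_sub_def)
qed simp_all

lemma pos_def_id_minus_powr: "pos_def s (id_minus_powr a)"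
proof -
  have "mat_mul s (id_minus_powr (- a / 2)) (id_minus_powr (a / 2)) = id_mat s"
    by (simp add: id_minus_powr_add id_minus_powr_0)
  then have "pos_def s (mat_mul s (id_minus_powr (a / 2)) (id_minus_powr (a / 2)))"
    by (intro pos_def_mul_self mat_sym_id_minus_powr)
  then show ?thesis
    by (simp add: id_minus_powr_add)
qed

end

section \<open>The coupling matrix\<close>

lemma cyc_shift_row_sum: "i < s \<Longrightarrow> (\<Sum>j<s. cyc_shift s i j) = 1"
  by (simp add: cyc_shift_def if_distrib cong: if_cong)

lemma cyc_shift_col_sum:
  assumes "i < s"
  shows "(\<Sum>j<s. cyc_shift s j i) = 1"
proof -
  define j0 where "j0 = (if i = 0 then s - 1 else i - 1)"
  have "i = Suc j mod s \<longleftrightarrow> j = j0" if "j < s" for j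
    using assms that by (cases "Suc j = s") (auto simp: j0_def)
  then have "(\<Sum>j<s. cyc_shift s j i) = (\<Sum>j<s. if j = j0 then 1 else 0)"
    using assms by (intro sum.cong) (auto simp: cyc_shift_def)
  also have "\<dots> = 1"
    using assms by (auto simp: j0_def)
  finally show ?thesis .
qed

lemma coupling_mat_entry:
  "i < s \<Longrightarrow> j < s \<Longrightarrow> coupling_mat s \<beta> \<alpha> i j = (if i = j then \<beta> else 0) + \<alpha> * (cyc_shift s i j + cyc_shift s j i)"
  by (simp add: coupling_mat_def mat_add_def mat_smult_def id_mat_def mat_transp_def)

lemma is_mat_coupling_mat [simp]: "is_mat s (coupling_mat s \<beta> \<alpha>)"
  by (simp add: coupling_mat_def)

lemma mat_sym_coupling_mat: "mat_sym s (coupling_mat s \<beta> \<alpha>)"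
  by (simp add: mat_sym_def coupling_mat_entry)

lemma row_sum_norm_le_id_minus_coupling:
  assumes "0 \<le> \<alpha>" "0 \<le> c"
  shows "row_sum_norm_le s (mat_sub s (id_mat s) (mat_smult s c (coupling_mat s \<beta> \<alpha>)))
      (\<bar>1 - c * \<beta>\<bar> + 2 * (c * \<alpha>))"
  unfolding row_sum_norm_le_def
proof (intro allI impI)
  fix i assume i: "i < s"
  let ?M = "mat_sub s (id_mat s) (mat_smult s c (coupling_mat s \<beta> \<alpha>))"
  have "\<bar>?M i j\<bar> \<le> (if i = j then \<bar>1 - c * \<beta>\<bar> else 0) + c * \<alpha> * cyc_shift s i j + c * \<alpha> * cyc_shift s j i"
    if "j < s" for j
  proof -
    have "?M i j = (if i = j then 1 - c * \<beta> else 0) - c * \<alpha> * (cyc_shift s i j + cyc_shift s j i)"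
      using i that by (simp add: mat_sub_def mat_smult_def id_mat_def coupling_mat_entry algebra_simps)
    moreover have "0 \<le> c * \<alpha> * (cyc_shift s i j + cyc_shift s j i)"
      using assms by (simp add: cyc_shift_def)
    ultimately show ?thesis
      using abs_triangle_ineq4[of "if i = j then 1 - c * \<beta> else 0" "c * \<alpha> * (cyc_shift s i j + cyc_shift s j i)"]
      by (simp add: distrib_left if_distrib[of abs] cong: if_cong)
  qed
  then have "(\<Sum>j<s. \<bar>?M i j\<bar>)
      \<le> (\<Sum>j<s. (if i = j then \<bar>1 - c * \<beta>\<bar> else 0) + c * \<alpha> * cyc_shift s i j + c * \<alpha> * cyc_shift s j i)"
    by (intro sum_mono) simp
  also have "\<dots> = \<bar>1 - c * \<beta>\<bar> + 2 * (c * \<alpha>)"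
    using i by (simp add: sum.distrib sum_distrib_left[symmetric] cyc_shift_row_sum cyc_shift_col_sum)
  finally show "(\<Sum>j<s. \<bar>?M i j\<bar>) \<le> \<bar>1 - c * \<beta>\<bar> + 2 * (c * \<alpha>)" .
qed

locale coupling =
  fixes s :: nat and \<alpha> \<beta> :: real
  assumes alpha_pos: "0 < \<alpha>" and beta_gt: "2 * \<alpha> < \<beta>" and sum_less_1: "\<beta> + 2 * \<alpha> < 1"
begin

abbreviation A :: "nat \<Rightarrow> nat \<Rightarrow> real" where
  "A \<equiv> coupling_mat s \<beta> \<alpha>"

abbreviation S :: "nat \<Rightarrow> nat \<Rightarrow> real" where
  "S \<equiv> mat_sqrt s (mat_sub s A (mat_mul s A A))"

abbreviation R :: "nat \<Rightarrow> nat \<Rightarrow> real" where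
  "R \<equiv> mat_inv s S"

sublocale A_powr: sym_contraction s "mat_sub s (id_mat s) A" "1 - \<beta> + 2 * \<alpha>"
proof
  show "row_sum_norm_le s (mat_sub s (id_mat s) A) (1 - \<beta> + 2 * \<alpha>)"
    using row_sum_norm_le_id_minus_coupling[of \<alpha> 1 s \<beta>] alpha_pos beta_gt sum_less_1
    by (simp add: mat_smult_1)
  show "mat_sym s (mat_sub s (id_mat s) A)"
    using mat_sym_coupling_mat[of s \<beta> \<alpha>] by (simp add: mat_sym_def mat_sub_def id_mat_def)
qed (use alpha_pos beta_gt sum_less_1 in simp_all)

text \<open>\<open>I - (I - 2A)\<^sup>2 = 4(A - A\<^sup>2)\<close>, so \<open>D2_powr.id_minus_powr a\<close> is \<open>(4(A - A\<^sup>2)) powr a\<close>; the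
  row-sum norm of \<open>I - 2A\<close> is \<open>< 1\<close> exactly when \<open>2\<alpha> < \<beta> < 1 - 2\<alpha>\<close>.\<close>
sublocale D2_powr: sym_contraction s
  "mat_mul s (mat_sub s (id_mat s) (mat_smult s 2 A)) (mat_sub s (id_mat s) (mat_smult s 2 A))"
  "(\<bar>1 - 2 * \<beta>\<bar> + 4 * \<alpha>)\<^sup>2"
proof
  let ?D = "mat_sub s (id_mat s) (mat_smult s 2 A)"
  have "row_sum_norm_le s ?D (\<bar>1 - 2 * \<beta>\<bar> + 4 * \<alpha>)"
    using row_sum_norm_le_id_minus_coupling[of \<alpha> 2 s \<beta>] alpha_pos by simp
  then show "row_sum_norm_le s (mat_mul s ?D ?D) ((\<bar>1 - 2 * \<beta>\<bar> + 4 * \<alpha>)\<^sup>2)"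
    using alpha_pos by (simp add: power2_eq_square row_sum_norm_le_mat_mul)
  have "mat_sym s ?D"
    using mat_sym_coupling_mat[of s \<beta> \<alpha>] by (simp add: mat_sym_def mat_sub_def mat_smult_def id_mat_def)
  then have "mat_sym s (mat_mul s ?D (mat_mul s (id_mat s) ?D))"
    by (intro mat_sym_sandwich) (simp_all add: mat_sym_def id_mat_def)
  then show "mat_sym s (mat_mul s ?D ?D)"
    by (simp add: mat_mul_id_left)
  have "\<bar>1 - 2 * \<beta>\<bar> + 4 * \<alpha> < 1"
    using alpha_pos beta_gt sum_less_1 by linarith
  then show "(\<bar>1 - 2 * \<beta>\<bar> + 4 * \<alpha>)\<^sup>2 < 1"
    using power_strict_mono[of "\<bar>1 - 2 * \<beta>\<bar> + 4 * \<alpha>" 1 2] alpha_pos by simp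
qed simp_all

lemma A_powr_1: "A_powr.id_minus_powr 1 = A"
proof (rule is_mat_eqI)
  fix i j assume "i < s" "j < s"
  then show "A_powr.id_minus_powr 1 i j = A i j"
    unfolding A_powr.id_minus_powr_1 by (simp add: mat_sub_def)
qed simp_all

lemma mat_inv_coupling_eq: "mat_inv s A = A_powr.id_minus_powr (-1)"
proof (rule mat_inv_eqI)
  show "mat_mul s A (A_powr.id_minus_powr (-1)) = id_mat s"
    using A_powr.id_minus_powr_add[of 1 "-1"] by (simp add: A_powr_1 A_powr.id_minus_powr_0)
  show "mat_mul s (A_powr.id_minus_powr (-1)) A = id_mat s"
    using A_powr.id_minus_powr_add[of "-1" 1] by (simp add: A_powr_1 A_powr.id_minus_powr_0)
qed simp

lemma coupling_inv:
  shows "mat_mul s A (mat_inv s A) = id_mat s" and "mat_mul s (mat_inv s A) A = id_mat s"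
    and "mat_sym s (mat_inv s A)"
  using A_powr.id_minus_powr_add[of 1 "-1"] A_powr.id_minus_powr_add[of "-1" 1]
  by (simp_all add: mat_inv_coupling_eq A_powr_1 A_powr.id_minus_powr_0 A_powr.mat_sym_id_minus_powr)

lemma inv_coupling_has_sqrt:
  "\<exists>K. is_mat s K \<and> mat_sym s K \<and> pos_def s K \<and> mat_mul s K K = mat_inv s A"
  using A_powr.id_minus_powr_add[of "-1/2" "-1/2"]
  by (intro exI[of _ "A_powr.id_minus_powr (-1/2)"])
    (simp add: mat_inv_coupling_eq A_powr.mat_sym_id_minus_powr A_powr.pos_def_id_minus_powr)

lemma D2_powr_1: "D2_powr.id_minus_powr 1 = mat_smult s 4 (mat_sub s A (mat_mul s A A))"
proof (rule is_mat_eqI)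
  fix i j assume ij: "i < s" "j < s"
  let ?D = "mat_sub s (id_mat s) (mat_smult s 2 A)"
  have D: "?D k l = id_mat s k l - 2 * A k l" for k l
    using is_mat_coupling_mat[of s \<beta> \<alpha>] by (auto simp: mat_sub_def mat_smult_def id_mat_def is_mat_def)
  have "mat_mul s ?D ?D i j = (\<Sum>k<s. (id_mat s i k - 2 * A i k) * (id_mat s k j - 2 * A k j))"
    using ij by (simp add: mat_mul_def D)
  also have "\<dots> = mat_mul s (id_mat s) (id_mat s) i j - 2 * mat_mul s (id_mat s) A i j
      - 2 * mat_mul s A (id_mat s) i j + 4 * mat_mul s A A i j"
    using ij by (simp add: mat_mul_def algebra_simps sum.distrib sum_subtractf sum_distrib_left)
  also have "\<dots> = id_mat s i j - 4 * A i j + 4 * mat_mul s A A i j"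
    by (simp add: mat_mul_id_left mat_mul_id_right)
  finally have DD: "mat_mul s ?D ?D i j = id_mat s i j - 4 * A i j + 4 * mat_mul s A A i j" .
  have "D2_powr.id_minus_powr 1 i j = id_mat s i j - mat_mul s ?D ?D i j"
    unfolding D2_powr.id_minus_powr_1 mat_sub_def[of s "id_mat s" "mat_mul s ?D ?D"] using ij by simp
  also have "\<dots> = id_mat s i j - (id_mat s i j - 4 * A i j + 4 * mat_mul s A A i j)"
    by (simp only: DD)
  also have "\<dots> = mat_smult s 4 (mat_sub s A (mat_mul s A A)) i j"
    using ij by (simp add: mat_sub_def mat_smult_def)
  finally show "D2_powr.id_minus_powr 1 i j = mat_smult s 4 (mat_sub s A (mat_mul s A A)) i j" .
qed simp_all

lemma S_eq: "S = mat_smult s (1/2) (D2_powr.id_minus_powr (1/2))"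
proof (rule mat_sqrt_eqI)
  show "mat_mul s (mat_smult s (1/2) (D2_powr.id_minus_powr (1/2))) (mat_smult s (1/2) (D2_powr.id_minus_powr (1/2)))
      = mat_sub s A (mat_mul s A A)"
    by (simp add: mat_mul_smult D2_powr.id_minus_powr_add D2_powr_1 mat_smult_mat_smult mat_smult_1)
qed (simp_all add: mat_sym_smult D2_powr.mat_sym_id_minus_powr pos_def_smult D2_powr.pos_def_id_minus_powr)

lemma R_eq: "R = mat_smult s 2 (D2_powr.id_minus_powr (-1/2))"
  unfolding S_eq by (rule mat_inv_eqI)
    (simp_all add: S_eq mat_mul_smult D2_powr.id_minus_powr_add D2_powr.id_minus_powr_0 mat_smult_1)

lemma mat_sym_S: "mat_sym s S"
  by (simp add: S_eq mat_sym_smult D2_powr.mat_sym_id_minus_powr)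

lemma mat_sym_R: "mat_sym s R"
  unfolding R_eq by (simp add: mat_sym_smult D2_powr.mat_sym_id_minus_powr)

lemma S_mul_S: "mat_mul s S S = mat_sub s A (mat_mul s A A)"
  by (simp add: S_eq mat_mul_smult D2_powr.id_minus_powr_add D2_powr_1 mat_smult_mat_smult mat_smult_1)

lemma S_mul_R: "mat_mul s S R = id_mat s"
  unfolding R_eq unfolding S_eq by (simp add: mat_mul_smult D2_powr.id_minus_powr_add D2_powr.id_minus_powr_0 mat_smult_1)

lemma R_mul_S: "mat_mul s R S = id_mat s"
  unfolding R_eq unfolding S_eq by (simp add: mat_mul_smult D2_powr.id_minus_powr_add D2_powr.id_minus_powr_0 mat_smult_1)

lemma is_mat_S [simp]: "is_mat s S"
  by (simp add: S_eq)

lemma quad_form_inv_coupling_add: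
  "quad_form s (mat_inv s A) (\<lambda>k. mat_vec s A m k + t k)
    = quad_form s A m + 2 * dot s t m + quad_form s (mat_inv s A) t"
proof -
  have "quad_form s (mat_inv s A) (mat_vec s A m) = quad_form s A m"
    by (simp add: quad_form_eq_dot mat_vec_inverse[OF coupling_inv(2)] dot_commute)
  moreover have "dot s (mat_vec s (mat_inv s A) t) (mat_vec s A m) = dot s t m"
    by (simp add: dot_mat_vec_sym[OF mat_sym_coupling_mat] mat_vec_inverse[OF coupling_inv(1)])
  ultimately show ?thesis
    by (simp add: quad_form_add[OF coupling_inv(3)])
qed

end

section \<open>Gaussian integrals on \<open>lebesgue_vec\<close>\<close>

lemma product_sigma_finite_lborel: "product_sigma_finite (\<lambda>_::nat. lborel :: real measure)"
  by (simp add: product_sigma_finite_def lborel.sigma_finite_measure_axioms)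

lemma product_sigma_finite_std_normal: "product_sigma_finite (\<lambda>_::nat. std_normal_distribution)"
  unfolding product_sigma_finite_def
  using prob_space_normal_density[of 1 0] by (simp add: prob_space_imp_sigma_finite)

lemma measurable_lebesgue_vec_translate:
  "(\<lambda>x. \<lambda>i\<in>{..<s}. x i + u i) \<in> measurable (lebesgue_vec s) (lebesgue_vec s)"
  unfolding lebesgue_vec_def by (intro measurable_restrict) measurable

lemma emeasure_lborel_translate:
  assumes "A \<in> sets borel"
  shows "emeasure lborel ((\<lambda>x::real. x + c) -` A) = emeasure lborel A"
proof -
  have "emeasure lborel A = emeasure (distr lborel borel ((+) c)) A"
    by (simp add: lborel_distr_plus)
  also have "\<dots> = emeasure lborel (((+) c) -` A \<inter> space lborel)"
    using assms by (intro emeasure_distr) auto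
  also have "((+) c) -` A \<inter> space lborel = (\<lambda>x::real. x + c) -` A"
    by (auto simp: add.commute)
  finally show ?thesis by simp
qed

lemma distr_lebesgue_vec_translate:
  "distr (lebesgue_vec s) (lebesgue_vec s) (\<lambda>x. \<lambda>i\<in>{..<s}. x i + u i) = lebesgue_vec s"
proof -
  interpret product_sigma_finite "\<lambda>_::nat. lborel :: real measure"
    by (rule product_sigma_finite_lborel)
  let ?T = "\<lambda>x. \<lambda>i\<in>{..<s}. x i + u i" and ?L = "Pi\<^sub>M {..<s} (\<lambda>_. lborel :: real measure)"
  show ?thesis unfolding lebesgue_vec_def
  proof (rule PiM_eqI)
    fix A :: "nat \<Rightarrow> real set" assume A: "\<And>i. i \<in> {..<s} \<Longrightarrow> A i \<in> sets lborel"
    have "?T -` Pi\<^sub>E {..<s} A \<inter> space ?L = Pi\<^sub>E {..<s} (\<lambda>i. (\<lambda>x. x + u i) -` A i)"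
      by (auto simp: space_PiM PiE_def Pi_def extensional_def)
    moreover have "Pi\<^sub>E {..<s} A \<in> sets ?L"
      using A by (intro sets_PiM_I_finite) auto
    moreover have "(\<lambda>x. x + u i) -` A i \<in> sets lborel" if "i \<in> {..<s}" for i
    proof -
      have "(\<lambda>x::real. x + u i) \<in> borel_measurable borel" by measurable
      from measurable_sets[OF this, of "A i"] A[OF that] show ?thesis by simp
    qed
    ultimately have "emeasure (distr ?L ?L ?T) (Pi\<^sub>E {..<s} A)
        = emeasure ?L (Pi\<^sub>E {..<s} (\<lambda>i. (\<lambda>x. x + u i) -` A i))"
      using measurable_lebesgue_vec_translate[of u s] by (simp add: emeasure_distr lebesgue_vec_def)
    also have "\<dots> = (\<Prod>i<s. emeasure lborel ((\<lambda>x. x + u i) -` A i))"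
      using \<open>\<And>i. i \<in> {..<s} \<Longrightarrow> (\<lambda>x. x + u i) -` A i \<in> sets lborel\<close> by (subst emeasure_PiM) auto
    also have "\<dots> = (\<Prod>i<s. emeasure lborel (A i))"
      using A by (intro prod.cong refl emeasure_lborel_translate) auto
    finally show "emeasure (distr ?L ?L ?T) (Pi\<^sub>E {..<s} A) = (\<Prod>i\<in>{..<s}. emeasure lborel (A i))" .
  qed simp_all
qed

lemma
  fixes g :: "(nat \<Rightarrow> real) \<Rightarrow> real"
  assumes g: "g \<in> borel_measurable (lebesgue_vec s)"
  shows integrable_lebesgue_vec_translate:
      "integrable (lebesgue_vec s) (\<lambda>x. g (\<lambda>i\<in>{..<s}. x i + u i)) \<longleftrightarrow> integrable (lebesgue_vec s) g"
    and integral_lebesgue_vec_translate: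
      "integral\<^sup>L (lebesgue_vec s) (\<lambda>x. g (\<lambda>i\<in>{..<s}. x i + u i)) = integral\<^sup>L (lebesgue_vec s) g"
  using integrable_distr_eq[OF measurable_lebesgue_vec_translate[of u s] g]
    integral_distr[OF measurable_lebesgue_vec_translate[of u s] g]
  by (simp_all add: distr_lebesgue_vec_translate)

lemma integrable_exp_neg_sum_sq: "integrable (lebesgue_vec s) (\<lambda>x. exp (- dot s x x / 2))"
proof -
  interpret product_sigma_finite "\<lambda>_::nat. lborel :: real measure"
    by (rule product_sigma_finite_lborel)
  have "integrable lborel (\<lambda>y. sqrt (2 * pi) * std_normal_density y)"
    by (intro integrable_mult_right integrable_normal_density) auto
  moreover have "sqrt (2 * pi) * std_normal_density y = exp (- (y * y) / 2)" for y :: real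
    by (simp add: std_normal_density_def power2_eq_square)
  ultimately have "integrable lborel (\<lambda>y::real. exp (- (y * y) / 2))"
    by simp
  then have "integrable (Pi\<^sub>M {..<s} (\<lambda>_. lborel)) (\<lambda>x::nat \<Rightarrow> real. \<Prod>i<s. exp (- (x i * x i) / 2))"
    by (intro product_integrable_prod) auto
  then show ?thesis
    by (simp add: lebesgue_vec_def dot_def exp_sum[symmetric] sum_negf sum_divide_distrib)
qed

lemma emeasure_space_lebesgue_vec_neq_0: "emeasure (lebesgue_vec s) (space (lebesgue_vec s)) \<noteq> 0"
proof -
  interpret product_sigma_finite "\<lambda>_::nat. lborel :: real measure"
    by (rule product_sigma_finite_lborel)
  have "emeasure (lebesgue_vec s) (Pi\<^sub>E {..<s} (\<lambda>_. {0..1})) = 1"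
    unfolding lebesgue_vec_def by (subst emeasure_PiM) auto
  moreover have "Pi\<^sub>E {..<s} (\<lambda>_. {0..1::real}) \<subseteq> space (lebesgue_vec s)"
    by (auto simp: lebesgue_vec_def space_PiM)
  ultimately show ?thesis
    by (metis emeasure_mono sets.top le_zero_eq one_neq_zero)
qed

lemma integral_pos_lebesgue_vec:
  fixes f :: "(nat \<Rightarrow> real) \<Rightarrow> real"
  assumes f: "integrable (lebesgue_vec s) f" and pos: "\<And>x. 0 < f x"
  shows "0 < integral\<^sup>L (lebesgue_vec s) f"
proof -
  have "integral\<^sup>L (lebesgue_vec s) f \<noteq> 0"
  proof
    assume "integral\<^sup>L (lebesgue_vec s) f = 0"
    then have "AE x in lebesgue_vec s. f x = 0"
      using integral_nonneg_eq_0_iff_AE[OF f] pos by (auto intro: less_imp_le)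
    then have "AE x in lebesgue_vec s. False"
    proof eventually_elim
      case (elim x)
      then show False using pos[of x] by simp
    qed
    then show False
      using emeasure_space_lebesgue_vec_neq_0[of s] by (simp add: ae_filter_eq_bot_iff)
  qed
  moreover have "0 \<le> integral\<^sup>L (lebesgue_vec s) f"
    using pos by (intro integral_nonneg_AE) (simp add: less_imp_le)
  ultimately show ?thesis by simp
qed

lemma measurable_quad_form [measurable]: "(\<lambda>x. quad_form s P x) \<in> borel_measurable (lebesgue_vec s)"
  unfolding quad_form_def lebesgue_vec_def by measurable

lemma measurable_dot [measurable]: "(\<lambda>x. dot s b x) \<in> borel_measurable (lebesgue_vec s)"
  unfolding dot_def lebesgue_vec_def by measurable

lemma
  assumes "\<And>x. dot s x x \<le> quad_form s P x"
  shows integrable_gaussian_weight: "integrable (lebesgue_vec s) (\<lambda>x. exp (- quad_form s P x / 2))"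
    and integral_gaussian_weight_pos: "0 < integral\<^sup>L (lebesgue_vec s) (\<lambda>x. exp (- quad_form s P x / 2))"
proof -
  show int: "integrable (lebesgue_vec s) (\<lambda>x. exp (- quad_form s P x / 2))"
    by (rule Bochner_Integration.integrable_bound[OF integrable_exp_neg_sum_sq]) (use assms in auto)
  show "0 < integral\<^sup>L (lebesgue_vec s) (\<lambda>x. exp (- quad_form s P x / 2))"
    by (rule integral_pos_lebesgue_vec[OF int]) simp
qed

text \<open>Completing the square: the substitution \<open>x \<mapsto> x + K b\<close> is a translation of Lebesgue measure.\<close>
lemma
  assumes P: "mat_sym s P" "\<And>x. dot s x x \<le> quad_form s P x" and inv: "mat_mul s P K = id_mat s"
  shows integrable_gaussian_weight_tilted:
      "integrable (lebesgue_vec s) (\<lambda>x. exp (- quad_form s P x / 2 + dot s b x))"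
    and integral_gaussian_weight_tilted:
      "integral\<^sup>L (lebesgue_vec s) (\<lambda>x. exp (- quad_form s P x / 2 + dot s b x))
        = exp (quad_form s K b / 2) * integral\<^sup>L (lebesgue_vec s) (\<lambda>x. exp (- quad_form s P x / 2))"
proof -
  define u where "u = mat_vec s K b"
  define g where "g = (\<lambda>x. exp (- quad_form s P x / 2))"
  have Pu: "mat_vec s P u = restrict b {..<s}"
    by (simp add: u_def mat_vec_inverse[OF inv])
  have "quad_form s P u = dot s u (restrict b {..<s})"
    by (simp only: quad_form_eq_dot Pu)
  also have "\<dots> = quad_form s K b"
    by (simp add: u_def quad_form_eq_dot dot_commute)
  finally have shift: "exp (- quad_form s P x / 2 + dot s b x) = exp (quad_form s K b / 2) * g (\<lambda>i\<in>{..<s}. x i + - u i)" for x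
    by (simp add: g_def quad_form_diff[OF P(1)] Pu exp_add[symmetric] field_simps)
  have g: "g \<in> borel_measurable (lebesgue_vec s)"
    unfolding g_def by measurable
  have "integrable (lebesgue_vec s) g"
    unfolding g_def by (rule integrable_gaussian_weight[OF P(2)])
  then show "integrable (lebesgue_vec s) (\<lambda>x. exp (- quad_form s P x / 2 + dot s b x))"
    unfolding shift using integrable_lebesgue_vec_translate[OF g, of "\<lambda>i. - u i"] by simp
  show "integral\<^sup>L (lebesgue_vec s) (\<lambda>x. exp (- quad_form s P x / 2 + dot s b x))
      = exp (quad_form s K b / 2) * integral\<^sup>L (lebesgue_vec s) (\<lambda>x. exp (- quad_form s P x / 2))"
    unfolding shift using integral_lebesgue_vec_translate[OF g, of "\<lambda>i. - u i"] by (simp add: g_def)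
qed

lemma
  shows integrable_std_normal_exp: "integrable std_normal_distribution (\<lambda>w. exp (a * w))"
    and integral_std_normal_exp: "integral\<^sup>L std_normal_distribution (\<lambda>w. exp (a * w)) = exp (a\<^sup>2 / 2)"
proof -
  have eq: "std_normal_density w * exp (a * w) = exp (a\<^sup>2 / 2) * normal_density a 1 w" for w
  proof -
    have "exp (- w\<^sup>2 / 2) * exp (a * w) = exp (a\<^sup>2 / 2) * exp (- (w - a)\<^sup>2 / 2)"
      by (simp add: exp_add[symmetric] power2_eq_square field_simps)
    then show ?thesis by (simp add: std_normal_density_def normal_density_def)
  qed
  have "integrable lborel (\<lambda>w. std_normal_density w * exp (a * w))"
    unfolding eq by (intro integrable_mult_right integrable_normal_density) auto
  then show "integrable std_normal_distribution (\<lambda>w. exp (a * w))"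
    by (subst integrable_density) auto
  have "integral\<^sup>L std_normal_distribution (\<lambda>w. exp (a * w))
      = integral\<^sup>L lborel (\<lambda>w. std_normal_density w * exp (a * w))"
    by (subst integral_density) auto
  then show "integral\<^sup>L std_normal_distribution (\<lambda>w. exp (a * w)) = exp (a\<^sup>2 / 2)"
    unfolding eq by simp
qed

lemma
  assumes K: "is_mat s K" "mat_sym s K" "pos_def s K" "mat_mul s K K = \<Sigma>"
  shows integrable_gauss_vec_exp: "integrable (gauss_vec s \<Sigma>) (\<lambda>z. exp (dot s t z))"
    and integral_gauss_vec_exp: "integral\<^sup>L (gauss_vec s \<Sigma>) (\<lambda>z. exp (dot s t z)) = exp (quad_form s \<Sigma> t / 2)"
proof -
  interpret product_sigma_finite "\<lambda>_::nat. std_normal_distribution"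
    by (rule product_sigma_finite_std_normal)
  define a where "a = mat_vec s K t"
  have gauss: "gauss_vec s \<Sigma> = distr (std_gauss_vec s) (lebesgue_vec s) (mat_vec s K)"
    by (simp add: gauss_vec_def mat_sqrt_eqI[OF K])
  have Km: "mat_vec s K \<in> measurable (std_gauss_vec s) (lebesgue_vec s)"
    unfolding mat_vec_def std_gauss_vec_def lebesgue_vec_def by (intro measurable_restrict) measurable
  have fm: "(\<lambda>z. exp (dot s t z)) \<in> borel_measurable (lebesgue_vec s)"
    by measurable
  have prod: "exp (dot s t (mat_vec s K w)) = (\<Prod>j<s. exp (a j * w j))" for w
  proof -
    have "dot s t (mat_vec s K w) = dot s a w"
      unfolding a_def by (rule dot_mat_vec_sym[OF K(2)])
    then show ?thesis by (simp add: dot_def exp_sum)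
  qed
  have "integrable (std_gauss_vec s) (\<lambda>w. \<Prod>j<s. exp (a j * w j))"
    unfolding std_gauss_vec_def by (intro product_integrable_prod) (auto simp: integrable_std_normal_exp)
  then show "integrable (gauss_vec s \<Sigma>) (\<lambda>z. exp (dot s t z))"
    by (simp add: gauss integrable_distr_eq[OF Km fm] prod)
  have "integral\<^sup>L (gauss_vec s \<Sigma>) (\<lambda>z. exp (dot s t z)) = integral\<^sup>L (std_gauss_vec s) (\<lambda>w. \<Prod>j<s. exp (a j * w j))"
    by (simp add: gauss integral_distr[OF Km fm] prod)
  also have "\<dots> = (\<Prod>j<s. exp ((a j)\<^sup>2 / 2))"
    unfolding std_gauss_vec_def by (subst product_integral_prod) (auto simp: integrable_std_normal_exp integral_std_normal_exp)
  also have "\<dots> = exp (quad_form s \<Sigma> t / 2)"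
    by (simp add: K(4)[symmetric] quad_form_mul_self[OF K(2)] a_def dot_def exp_sum[symmetric]
        power2_eq_square sum_divide_distrib)
  finally show "integral\<^sup>L (gauss_vec s \<Sigma>) (\<lambda>z. exp (dot s t z)) = exp (quad_form s \<Sigma> t / 2)" .
qed

section \<open>Summing out the spins\<close>

definition scaled_magn :: "nat \<Rightarrow> nat \<Rightarrow> (nat \<Rightarrow> real) \<Rightarrow> nat \<Rightarrow> real" where
  "scaled_magn N s \<sigma> k = sqrt (real N / real s) * magn N s \<sigma> k"

lemma gibbs_weight_eq:
  "gibbs_weight N s A \<sigma> = (1/2) ^ N * exp (quad_form s A (scaled_magn N s \<sigma>) / 2)"
proof -
  have "quad_form s A (scaled_magn N s \<sigma>) = real N / real s * (\<Sum>k<s. \<Sum>l<s. magn N s \<sigma> k * A k l * magn N s \<sigma> l)"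
    by (simp add: quad_form_def scaled_magn_def sum_distrib_left ac_simps)
  then show ?thesis
    by (simp add: gibbs_weight_def mult.commute)
qed

lemma sum_spins_exp: "(\<Sum>\<sigma>\<in>spins N. (1/2) ^ N * exp (\<Sum>i<N. a i * \<sigma> i)) = (\<Prod>i<N. cosh (a i))"
proof -
  have "(\<Sum>\<sigma>\<in>spins N. (1/2) ^ N * exp (\<Sum>i<N. a i * \<sigma> i)) = (\<Sum>\<sigma>\<in>spins N. \<Prod>i<N. exp (a i * \<sigma> i) / 2)"
    by (simp add: exp_sum prod_dividef power_one_over)
  also have "\<dots> = (\<Prod>i<N. \<Sum>v\<in>{-1, 1}. exp (a i * v) / 2)"
    unfolding spins_def by (rule prod_sum_PiE[symmetric]) auto
  also have "\<dots> = (\<Prod>i<N. cosh (a i))"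
    by (simp add: cosh_def add_divide_distrib add.commute)
  finally show ?thesis .
qed

text \<open>\<open>y\<close> couples to the spins only through the block sums, so the spin sum factorises into
  \<open>cosh\<close> terms, \<open>N/s\<close> equal ones per block.\<close>
lemma sum_spins_exp_scaled_magn:
  assumes "0 < s" "s dvd N"
  shows "(\<Sum>\<sigma>\<in>spins N. (1/2) ^ N * exp (dot s y (scaled_magn N s \<sigma>)))
    = exp (real N / real s * (\<Sum>k<s. ln (cosh (sqrt (real s / real N) * y k))))"
proof -
  obtain n where N: "N = s * n"
    using assms(2) by blast
  define c where "c = sqrt (real s / real N)"
  have block: "block N s k = {k * n ..< k * n + n}" for k
    using assms(1) by (simp add: block_def N add.commute)
  have div: "i div n = k" if "i \<in> {k * n ..< k * n + n}" for i k
    using that by (intro div_nat_eqI) (simp_all add: mult.commute)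
  have coef: "sqrt (real N / real s) * (real s / real N) = c"
    by (cases "N = 0") (simp_all add: c_def real_sqrt_divide real_div_sqrt field_simps)
  have "y k * scaled_magn N s \<sigma> k = (\<Sum>i\<in>{k * n ..< k * n + n}. c * y (i div n) * \<sigma> i)" for \<sigma> k
  proof -
    have "y k * scaled_magn N s \<sigma> k = (\<Sum>i\<in>{k * n ..< k * n + n}. c * y k * \<sigma> i)"
      by (simp add: scaled_magn_def magn_def block coef[symmetric] sum_distrib_left ac_simps)
    also have "\<dots> = (\<Sum>i\<in>{k * n ..< k * n + n}. c * y (i div n) * \<sigma> i)"
      by (intro sum.cong refl) (simp add: div)
    finally show ?thesis .
  qed
  then have "dot s y (scaled_magn N s \<sigma>) = (\<Sum>i<N. c * y (i div n) * \<sigma> i)" for \<sigma>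
    unfolding dot_def N by (simp add: sum.nat_group)
  then have "(\<Sum>\<sigma>\<in>spins N. (1/2) ^ N * exp (dot s y (scaled_magn N s \<sigma>))) = (\<Prod>i<N. cosh (c * y (i div n)))"
    by (simp add: sum_spins_exp)
  also have "\<dots> = (\<Prod>k<s. \<Prod>i\<in>{k * n ..< k * n + n}. cosh (c * y k))"
    unfolding N prod.nat_group[symmetric] by (intro prod.cong refl) (simp add: div)
  also have "\<dots> = (\<Prod>k<s. exp (real n * ln (cosh (c * y k))))"
    by (simp add: exp_of_nat_mult)
  also have "\<dots> = exp (real n * (\<Sum>k<s. ln (cosh (c * y k))))"
    by (simp add: exp_sum sum_distrib_left)
  also have "real n = real N / real s"
    using assms(1) by (simp add: N)
  finally show ?thesis
    by (simp add: c_def)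
qed

section \<open>Strong log-concavity of \<open>\<rho>\<^sub>N\<close>\<close>

lemma convex_on_neg_G_fun: "convex_on UNIV (\<lambda>y. - G_fun y)"
proof (rule convex_on_realI[where f' = "\<lambda>y. y - tanh y"])
  fix y :: real
  have "0 < cosh y" by simp
  then have "((\<lambda>y. y\<^sup>2 / 2 - ln (cosh y)) has_real_derivative (2 * y / 2 - sinh y / cosh y)) (at y)"
    by (auto intro!: derivative_eq_intros)
  then show "((\<lambda>y. - G_fun y) has_real_derivative y - tanh y) (at y)"
    by (simp add: G_fun_def tanh_def)
next
  fix x y :: real assume "x \<le> y"
  show "x - tanh x \<le> y - tanh y"
  proof (rule DERIV_nonneg_imp_nondecreasing[OF \<open>x \<le> y\<close>])
    fix z :: real
    have "((\<lambda>z. z - tanh z) has_real_derivative 1 - (1 - (tanh z)\<^sup>2)) (at z)"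
      by (auto intro!: derivative_eq_intros)
    then show "\<exists>d. ((\<lambda>z. z - tanh z) has_real_derivative d) (at z) \<and> 0 \<le> d"
      by force
  qed
qed auto

lemma strongly_convex_half_dot_plus_convex:
  assumes V: "\<And>x y \<theta>. 0 \<le> \<theta> \<Longrightarrow> \<theta> \<le> 1 \<Longrightarrow> V (\<lambda>i. \<theta> * x i + (1 - \<theta>) * y i) \<le> \<theta> * V x + (1 - \<theta>) * V y"
  shows "strongly_convex s (\<lambda>x. dot s x x / 2 + V x)"
  unfolding strongly_convex_def
proof (intro exI[of _ 1] conjI allI ballI)
  fix x y :: "nat \<Rightarrow> real" and \<theta> :: real assume "\<theta> \<in> {0..1}"
  let ?z = "\<lambda>i. \<theta> * x i + (1 - \<theta>) * y i"
  have "(?z i)\<^sup>2 = \<theta> * (x i * x i) + (1 - \<theta>) * (y i * y i) - \<theta> * (1 - \<theta>) * (x i - y i)\<^sup>2" for i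
    by (simp add: power2_eq_square algebra_simps)
  then have "dot s ?z ?z = \<theta> * dot s x x + (1 - \<theta>) * dot s y y - \<theta> * (1 - \<theta>) * (\<Sum>i<s. (x i - y i)\<^sup>2)"
    by (simp add: dot_def power2_eq_square[symmetric] sum.distrib sum_subtractf sum_distrib_left)
  moreover have "V ?z \<le> \<theta> * V x + (1 - \<theta>) * V y"
    using V \<open>\<theta> \<in> {0..1}\<close> by simp
  ultimately show "dot s ?z ?z / 2 + V ?z
      \<le> \<theta> * (dot s x x / 2 + V x) + (1 - \<theta>) * (dot s y y / 2 + V y) - 1 / 2 * \<theta> * (1 - \<theta>) * (\<Sum>i<s. (x i - y i)\<^sup>2)"
    by (simp add: field_simps)
qed simp

lemma sum_neg_G_fun_convex:
  assumes "0 \<le> \<theta>" "\<theta> \<le> 1"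
  shows "(\<Sum>k<s. - G_fun (c * (\<Sum>j<s. C k j * (\<theta> * x j + (1 - \<theta>) * y j))))
    \<le> \<theta> * (\<Sum>k<s. - G_fun (c * (\<Sum>j<s. C k j * x j))) + (1 - \<theta>) * (\<Sum>k<s. - G_fun (c * (\<Sum>j<s. C k j * y j)))"
proof -
  have "(\<Sum>j<s. C k j * (\<theta> * x j + (1 - \<theta>) * y j))
      = \<theta> * (\<Sum>j<s. C k j * x j) + (1 - \<theta>) * (\<Sum>j<s. C k j * y j)" for k
    by (simp add: distrib_left sum.distrib sum_distrib_left ac_simps)
  then have lin: "c * (\<Sum>j<s. C k j * (\<theta> * x j + (1 - \<theta>) * y j))
      = \<theta> * (c * (\<Sum>j<s. C k j * x j)) + (1 - \<theta>) * (c * (\<Sum>j<s. C k j * y j))" for k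
    by (simp add: distrib_left ac_simps)
  have conv: "- G_fun (\<theta> * a + (1 - \<theta>) * b) \<le> \<theta> * - G_fun a + (1 - \<theta>) * - G_fun b" for a b
    using convex_onD[OF convex_on_neg_G_fun, of "1 - \<theta>" a b] assms by (simp add: add.commute)
  have "(\<Sum>k<s. - G_fun (c * (\<Sum>j<s. C k j * (\<theta> * x j + (1 - \<theta>) * y j))))
      \<le> (\<Sum>k<s. \<theta> * - G_fun (c * (\<Sum>j<s. C k j * x j)) + (1 - \<theta>) * - G_fun (c * (\<Sum>j<s. C k j * y j)))"
    unfolding lin by (intro sum_mono conv)
  also have "\<dots> = \<theta> * (\<Sum>k<s. - G_fun (c * (\<Sum>j<s. C k j * x j)))
      + (1 - \<theta>) * (\<Sum>k<s. - G_fun (c * (\<Sum>j<s. C k j * y j)))"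
    by (simp only: sum.distrib sum_distrib_left)
  finally show ?thesis .
qed

lemma rho_unnorm_strongly_log_concave:
  assumes "0 < Z"
  shows "\<exists>U. strongly_convex s U \<and> (\<forall>x. rho_unnorm N s C x / Z = exp (- U x))"
proof -
  define c where "c = sqrt (real s / real N)"
  define V where "V x = real N / real s * (\<Sum>k<s. - G_fun (c * (\<Sum>j<s. C k j * x j))) + ln Z" for x
  have "V (\<lambda>i. \<theta> * x i + (1 - \<theta>) * y i) \<le> \<theta> * V x + (1 - \<theta>) * V y"
    if "0 \<le> \<theta>" "\<theta> \<le> 1" for x y \<theta>
  proof -
    have "real N / real s * (\<Sum>k<s. - G_fun (c * (\<Sum>j<s. C k j * (\<theta> * x j + (1 - \<theta>) * y j))))
        \<le> real N / real s * (\<theta> * (\<Sum>k<s. - G_fun (c * (\<Sum>j<s. C k j * x j)))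
        + (1 - \<theta>) * (\<Sum>k<s. - G_fun (c * (\<Sum>j<s. C k j * y j))))"
      using sum_neg_G_fun_convex[OF that] by (intro mult_left_mono) simp_all
    moreover have "a \<le> b * (\<theta> * p + (1 - \<theta>) * q) \<Longrightarrow> a + L \<le> \<theta> * (b * p + L) + (1 - \<theta>) * (b * q + L)"
      for a b p q L :: real
      by (simp add: algebra_simps)
    ultimately show ?thesis
      unfolding V_def by blast
  qed
  then have "strongly_convex s (\<lambda>x. dot s x x / 2 + V x)"
    by (rule strongly_convex_half_dot_plus_convex)
  moreover have "rho_unnorm N s C x / Z = exp (- (dot s x x / 2 + V x))" for x
  proof -
    have "- (dot s x x / 2 + V x)
        = - (1/2) * (\<Sum>i<s. (x i)\<^sup>2) + real N / real s * (\<Sum>k<s. G_fun (c * (\<Sum>j<s. C k j * x j))) - ln Z"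
      by (simp add: V_def dot_def power2_eq_square sum_negf algebra_simps)
    then show ?thesis
      using assms by (simp add: rho_unnorm_def c_def exp_diff)
  qed
  ultimately show ?thesis by blast
qed

section \<open>The moment generating function identity\<close>

locale block_coupling = coupling s \<alpha> \<beta> for s :: nat and \<alpha> \<beta> :: real +
  fixes N :: nat
  assumes s_pos: "0 < s" and N_pos: "0 < N" and s_dvd_N: "s dvd N"
begin

abbreviation C :: "nat \<Rightarrow> nat \<Rightarrow> real" where
  "C \<equiv> mat_mul s A R"

text \<open>\<open>P = R A R = I + C\<^sup>T C\<close> collects the Gaussian part of \<open>\<rho>\<^sub>N\<close>; its inverse is \<open>S A\<^sup>-\<^sup>1 S\<close>.\<close>
abbreviation P :: "nat \<Rightarrow> nat \<Rightarrow> real" where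
  "P \<equiv> mat_mul s R (mat_mul s A R)"

definition gibbs_partition :: real where
  "gibbs_partition = (\<Sum>\<sigma>\<in>spins N. gibbs_weight N s A \<sigma>)"

definition magn_mgf :: "(nat \<Rightarrow> real) \<Rightarrow> real" where
  "magn_mgf t = (\<Sum>\<sigma>\<in>spins N. gibbs_prob N s A \<sigma> * exp (dot s t (scaled_magn N s \<sigma>)))"

definition gauss_norm :: real where
  "gauss_norm = integral\<^sup>L (lebesgue_vec s) (\<lambda>x. exp (- quad_form s P x / 2))"

lemma mat_sym_P: "mat_sym s P"
  by (intro mat_sym_sandwich mat_sym_R mat_sym_coupling_mat)

lemma quad_form_P: "quad_form s P x = dot s x x + dot s (mat_vec s C x) (mat_vec s C x)"
proof -
  define w where "w = mat_vec s R x"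
  have "dot s x x = dot s (mat_vec s S w) (mat_vec s S w)"
    by (simp add: w_def mat_vec_inverse[OF S_mul_R])
  also have "\<dots> = quad_form s (mat_sub s A (mat_mul s A A)) w"
    by (simp add: quad_form_mul_self[OF mat_sym_S, symmetric] S_mul_S)
  also have "\<dots> = quad_form s A w - dot s (mat_vec s C x) (mat_vec s C x)"
    by (simp add: quad_form_mat_sub quad_form_mul_self[OF mat_sym_coupling_mat] w_def mat_vec_mat_vec)
  finally show ?thesis
    by (simp add: quad_form_sandwich[OF mat_sym_R] w_def)
qed

lemma dot_le_quad_form_P: "dot s x x \<le> quad_form s P x"
  by (simp add: quad_form_P dot_def sum_nonneg)

lemma P_inverse: "mat_mul s P (mat_mul s S (mat_mul s (mat_inv s A) S)) = id_mat s"
proof -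
  have "mat_mul s R (mat_mul s S M) = M" if "is_mat s M" for M
    using that by (simp add: mat_mul_assoc[symmetric] R_mul_S mat_mul_id_left)
  moreover have "mat_mul s A (mat_mul s (mat_inv s A) M) = M" if "is_mat s M" for M
    using that by (simp add: mat_mul_assoc[symmetric] coupling_inv(1) mat_mul_id_left)
  ultimately show ?thesis
    by (simp add: mat_mul_assoc R_mul_S)
qed

lemma rho_unnorm_eq_sum_spins:
  "rho_unnorm N s C x
    = (\<Sum>\<sigma>\<in>spins N. (1/2) ^ N * exp (- quad_form s P x / 2 + dot s (mat_vec s C x) (scaled_magn N s \<sigma>)))"
proof -
  define y where "y = (\<lambda>k. \<Sum>j<s. C k j * x j)"
  define c where "c = sqrt (real s / real N)"
  have Cx: "mat_vec s C x = restrict y {..<s}"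
    by (simp add: mat_vec_def y_def)
  have y: "(\<Sum>j<s. C k j * x j) = y k" for k
    by (simp add: y_def)
  have NC: "real N / real s * c\<^sup>2 = 1"
    using s_pos N_pos by (simp add: c_def)
  have "real N / real s * G_fun (c * y k)
      = real N / real s * ln (cosh (c * y k)) - (real N / real s * c\<^sup>2) * (y k * y k) / 2" for k
    by (simp add: G_fun_def power2_eq_square algebra_simps)
  then have "real N / real s * G_fun (c * y k) = real N / real s * ln (cosh (c * y k)) - y k * y k / 2" for k
    by (simp only: NC mult_1_left)
  then have G: "real N / real s * (\<Sum>k<s. G_fun (c * y k))
      = real N / real s * (\<Sum>k<s. ln (cosh (c * y k))) - dot s y y / 2"
    by (simp add: dot_def sum_distrib_left sum_subtractf sum_divide_distrib)
  have "rho_unnorm N s C x = exp (- dot s x x / 2 + real N / real s * (\<Sum>k<s. G_fun (c * y k)))"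
    by (simp add: rho_unnorm_def y c_def[symmetric] dot_def power2_eq_square)
  also have "\<dots> = exp (- quad_form s P x / 2) * exp (real N / real s * (\<Sum>k<s. ln (cosh (c * y k))))"
    unfolding G by (simp add: quad_form_P Cx exp_add[symmetric] field_simps)
  also have "\<dots> = exp (- quad_form s P x / 2) * (\<Sum>\<sigma>\<in>spins N. (1/2) ^ N * exp (dot s y (scaled_magn N s \<sigma>)))"
    by (simp add: sum_spins_exp_scaled_magn[OF s_pos s_dvd_N] c_def)
  finally show ?thesis
    by (simp add: Cx sum_distrib_left mult.left_commute exp_add[symmetric])
qed

lemma dot_C_add_dot_R:
  "dot s (mat_vec s C x) m + dot s t (mat_vec s R x) = dot s (mat_vec s R (\<lambda>k. mat_vec s A m k + t k)) x"
proof -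
  have "dot s (mat_vec s C x) m = dot s (mat_vec s A m) (mat_vec s R x)"
    by (simp add: mat_vec_mat_vec[symmetric] dot_mat_vec_sym[OF mat_sym_coupling_mat] dot_commute)
  then show ?thesis
    by (simp add: dot_mat_vec_sym[OF mat_sym_R, symmetric] dot_add_left)
qed

lemma gibbs_partition_pos: "0 < gibbs_partition"
  unfolding gibbs_partition_def spins_def
  by (intro sum_pos finite_PiE) (auto simp: gibbs_weight_def PiE_eq_empty_iff)

lemma gauss_norm_pos: "0 < gauss_norm"
  unfolding gauss_norm_def by (rule integral_gaussian_weight_pos[OF dot_le_quad_form_P])

lemma sum_gibbs_weight_exp:
  "(\<Sum>\<sigma>\<in>spins N. gibbs_weight N s A \<sigma> * exp (dot s t (scaled_magn N s \<sigma>))) = gibbs_partition * magn_mgf t"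
  using gibbs_partition_pos
  by (simp add: magn_mgf_def gibbs_prob_def gibbs_partition_def[symmetric] sum_distrib_left)

lemma magn_mgf_0: "magn_mgf (\<lambda>_. 0) = 1"
  using sum_gibbs_weight_exp[of "\<lambda>_. 0"] gibbs_partition_pos
  by (simp add: dot_def gibbs_partition_def)

lemma
  shows integrable_rho_tilted:
      "integrable (lebesgue_vec s) (\<lambda>x. rho_unnorm N s C x * exp (dot s t (mat_vec s R x)))"
    and integral_rho_tilted:
      "integral\<^sup>L (lebesgue_vec s) (\<lambda>x. rho_unnorm N s C x * exp (dot s t (mat_vec s R x)))
        = gauss_norm * gibbs_partition * magn_mgf t * exp (quad_form s (mat_inv s A) t / 2)"
proof -
  define v where "v \<sigma> = (\<lambda>k. mat_vec s A (scaled_magn N s \<sigma>) k + t k)" for \<sigma>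
  note gauss = integrable_gaussian_weight_tilted[OF mat_sym_P dot_le_quad_form_P P_inverse]
    integral_gaussian_weight_tilted[OF mat_sym_P dot_le_quad_form_P P_inverse]
  have eq: "rho_unnorm N s C x * exp (dot s t (mat_vec s R x))
      = (\<Sum>\<sigma>\<in>spins N. (1/2) ^ N * exp (- quad_form s P x / 2 + dot s (mat_vec s R (v \<sigma>)) x))" for x
    by (simp add: rho_unnorm_eq_sum_spins sum_distrib_right v_def dot_C_add_dot_R[symmetric] mult.assoc
        exp_add[symmetric]) (simp add: algebra_simps)
  show "integrable (lebesgue_vec s) (\<lambda>x. rho_unnorm N s C x * exp (dot s t (mat_vec s R x)))"
    unfolding eq by (intro Bochner_Integration.integrable_sum integrable_mult_right gauss(1))
  have weight: "(1/2) ^ N * exp (quad_form s (mat_mul s S (mat_mul s (mat_inv s A) S)) (mat_vec s R (v \<sigma>)) / 2)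
      = gibbs_weight N s A \<sigma> * exp (dot s t (scaled_magn N s \<sigma>)) * exp (quad_form s (mat_inv s A) t / 2)" for \<sigma>
    by (simp add: quad_form_sandwich[OF mat_sym_S] mat_vec_inverse[OF S_mul_R] v_def quad_form_inv_coupling_add
        gibbs_weight_eq add_divide_distrib exp_add)
  have "integral\<^sup>L (lebesgue_vec s) (\<lambda>x. rho_unnorm N s C x * exp (dot s t (mat_vec s R x)))
      = (\<Sum>\<sigma>\<in>spins N. integral\<^sup>L (lebesgue_vec s)
          (\<lambda>x. (1/2) ^ N * exp (- quad_form s P x / 2 + dot s (mat_vec s R (v \<sigma>)) x)))"
    unfolding eq by (rule Bochner_Integration.integral_sum) (intro integrable_mult_right gauss(1))
  also have "\<dots> = (\<Sum>\<sigma>\<in>spins N. (1/2) ^ N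
      * (exp (quad_form s (mat_mul s S (mat_mul s (mat_inv s A) S)) (mat_vec s R (v \<sigma>)) / 2) * gauss_norm))"
    by (simp only: integral_mult_right_zero gauss(2) gauss_norm_def)
  also have "\<dots> = (\<Sum>\<sigma>\<in>spins N. gibbs_weight N s A \<sigma> * exp (dot s t (scaled_magn N s \<sigma>)))
      * exp (quad_form s (mat_inv s A) t / 2) * gauss_norm"
    unfolding sum_distrib_right by (simp only: weight[symmetric]) (simp only: mult.assoc)
  also have "\<dots> = gauss_norm * gibbs_partition * magn_mgf t * exp (quad_form s (mat_inv s A) t / 2)"
    by (simp add: sum_gibbs_weight_exp ac_simps)
  finally show "integral\<^sup>L (lebesgue_vec s) (\<lambda>x. rho_unnorm N s C x * exp (dot s t (mat_vec s R x)))
      = gauss_norm * gibbs_partition * magn_mgf t * exp (quad_form s (mat_inv s A) t / 2)" .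
qed

lemma
  shows integrable_rho: "integrable (lebesgue_vec s) (rho_unnorm N s C)"
    and integral_rho: "integral\<^sup>L (lebesgue_vec s) (rho_unnorm N s C) = gauss_norm * gibbs_partition"
  using integrable_rho_tilted[of "\<lambda>_. 0"] integral_rho_tilted[of "\<lambda>_. 0"]
  by (simp_all add: dot_def quad_form_def magn_mgf_0)

lemma
  shows integrable_gibbs_gauss_mgf:
      "integrable (gauss_vec s (mat_inv s A))
        (\<lambda>z. \<Sum>\<sigma>\<in>spins N. gibbs_prob N s A \<sigma> * exp (dot s t z + dot s t (scaled_magn N s \<sigma>)))"
    and integral_gibbs_gauss_mgf:
      "integral\<^sup>L (gauss_vec s (mat_inv s A))
        (\<lambda>z. \<Sum>\<sigma>\<in>spins N. gibbs_prob N s A \<sigma> * exp (dot s t z + dot s t (scaled_magn N s \<sigma>)))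
        = magn_mgf t * exp (quad_form s (mat_inv s A) t / 2)"
proof -
  obtain K where K: "is_mat s K" "mat_sym s K" "pos_def s K" "mat_mul s K K = mat_inv s A"
    using inv_coupling_has_sqrt by blast
  have eq: "(\<Sum>\<sigma>\<in>spins N. gibbs_prob N s A \<sigma> * exp (dot s t z + dot s t (scaled_magn N s \<sigma>)))
      = magn_mgf t * exp (dot s t z)" for z
    by (simp add: magn_mgf_def exp_add sum_distrib_left ac_simps)
  show "integrable (gauss_vec s (mat_inv s A))
      (\<lambda>z. \<Sum>\<sigma>\<in>spins N. gibbs_prob N s A \<sigma> * exp (dot s t z + dot s t (scaled_magn N s \<sigma>)))"
    unfolding eq by (intro integrable_mult_right integrable_gauss_vec_exp[OF K])
  show "integral\<^sup>L (gauss_vec s (mat_inv s A))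
      (\<lambda>z. \<Sum>\<sigma>\<in>spins N. gibbs_prob N s A \<sigma> * exp (dot s t z + dot s t (scaled_magn N s \<sigma>)))
      = magn_mgf t * exp (quad_form s (mat_inv s A) t / 2)"
    unfolding eq by (simp add: integral_gauss_vec_exp[OF K])
qed

end

theorem lemma5p1:
  fixes N s :: nat and \<alpha> \<beta> :: real and t :: "nat \<Rightarrow> real"
  assumes "0 < s" and "0 < N" and "s dvd N"
    and "\<beta> > 2 * \<alpha>" and "\<alpha> > 0" and "\<beta> + 2 * \<alpha> < 1"
  defines "A \<equiv> coupling_mat s \<beta> \<alpha>"
  defines "R \<equiv> mat_inv s (mat_sqrt s (mat_sub s A (mat_mul s A A)))"
  defines "C \<equiv> mat_mul s A R"
  defines "Z\<rho> \<equiv> integral\<^sup>L (lebesgue_vec s) (rho_unnorm N s C)"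
  defines "lhs_fun \<equiv> (\<lambda>z. \<Sum>\<sigma>\<in>spins N. gibbs_prob N s A \<sigma> *
              exp (\<Sum>k<s. t k * (z k + sqrt (real N / real s) * magn N s \<sigma> k)))"
  defines "rhs_fun \<equiv> (\<lambda>x. rho_unnorm N s C x / Z\<rho> * exp (\<Sum>k<s. t k * mat_vec s R x k))"
  shows "integrable (lebesgue_vec s) (rho_unnorm N s C) \<and> 0 < Z\<rho>
    \<and> (\<exists>U. strongly_convex s U \<and>
          (\<forall>x\<in>space (lebesgue_vec s). rho_unnorm N s C x / Z\<rho> = exp (- U x)))
    \<and> integrable (gauss_vec s (mat_inv s A)) lhs_fun
    \<and> integrable (lebesgue_vec s) rhs_fun
    \<and> integral\<^sup>L (gauss_vec s (mat_inv s A)) lhs_fun = integral\<^sup>L (lebesgue_vec s) rhs_fun"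
proof -
  interpret block_coupling s \<alpha> \<beta> N
    using assms(1-6) by unfold_locales auto
  have lhs: "lhs_fun = (\<lambda>z. \<Sum>\<sigma>\<in>spins N. gibbs_prob N s A \<sigma> * exp (dot s t z + dot s t (scaled_magn N s \<sigma>)))"
    unfolding lhs_fun_def by (simp add: dot_def scaled_magn_def distrib_left sum.distrib)
  have rhs: "rhs_fun = (\<lambda>x. rho_unnorm N s C x * exp (dot s t (mat_vec s R x)) / Z\<rho>)"
    unfolding rhs_fun_def by (simp add: dot_def)
  have Z: "Z\<rho> = gauss_norm * gibbs_partition"
    unfolding Z\<rho>_def C_def R_def A_def by (rule integral_rho)
  have Z_pos: "0 < Z\<rho>"
    unfolding Z using gauss_norm_pos gibbs_partition_pos by simp
  have "integral\<^sup>L (lebesgue_vec s) rhs_fun = magn_mgf t * exp (quad_form s (mat_inv s A) t / 2)"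
    using gauss_norm_pos gibbs_partition_pos unfolding rhs C_def R_def A_def by (simp add: integral_rho_tilted Z)
  then show ?thesis
    using integrable_rho rho_unnorm_strongly_log_concave[OF Z_pos, where N = N and s = s and C = C] Z_pos
      integrable_gibbs_gauss_mgf integral_gibbs_gauss_mgf integrable_rho_tilted
    unfolding lhs rhs C_def R_def A_def by (auto intro: integrable_divide)
qed

end
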